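(* Every binary subspace chirp is a stabilizer state. Conversely, every stabilizer state in $\mathbb C^{2^m}$ equals $\lambda\mathbf w$ for some binary subspace chirp $\mathbf w$ and some $\lambda\in\mathbb C$ with $|\lambda|=1$.
   Context: Fix $m\ge1$, $N=2^m$. Binary vectors are columns over $\mathbb F_2$; $\mathrm{Sym}(r;2)$ is the set of symmetric binary $r\times r$ matrices, $\mathcal G(m,r;2)$ the set of $r$-dimensional subspaces of $\mathbb F_2^m$. The standard basis of $\mathbb C^N=(\mathbb C^2)^{\otimes m}$ is $\{\mathbf e_{\mathbf v}=\mathbf e_{v_1}\otimes\cdots\otimes\mathbf e_{v_m}:\mathbf v\in\mathbb F_2^m\}$ and vectors of $\mathbb C^N$ are indexed by $\mathbb F_2^m$. Whenever a binary expression appears in an exponent of $i$, binary entries are lifted to the integers $0,1$ and the expression is evaluated in $\mathbb Z$ (equivalently mod 4). Pauli matrices: $\sigma_x=\begin{pmatrix}0&1\\1&0\end{pmatrix}$, $\sigma_z=\begin{pmatrix}1&0\\0&-1\end{pmatrix}$; for $\mathbf a,\mathbf b\in\mathbb F_2^m$, $\mathbf D(\mathbf a,\mathbf b)=\sigma_x^{a_1}\sigma_z^{b_1}\otimes\cdots\otimes\sigma_x^{a_m}\sigma_z^{b_m}$. The Heisenberg–Weyl group is $\mathcal{HW}_N=\{i^k\mathbf D(\mathbf a,\mathbf b):\mathbf a,\mathbf b\in\mathbb F_2^m,k\in\{0,1,2,3\}\}$. A stabilizer group is a commutative subgroup $\mathcal S\subseteq\mathcal{HW}_N$ with $-\mathbf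 I_N\notin\mathcal S$; it is maximal if $|\mathcal S|=2^m$. For a maximal stabilizer group $\mathcal S$, the space $V(\mathcal S)=\{\mathbf v\in\mathbb C^N:\mathbf E\mathbf v=\mathbf v\ \forall\mathbf E\in\mathcal S\}$ is one-dimensional, and a unit vector spanning it is called a stabilizer state. Echelon data: for $0\le r\le m$ and $H\in\mathcal G(m,r;2)$, let $\mathbf H_{\mathcal I}$ be the unique $m\times r$ binary matrix in column reduced echelon form with column space $H$: there are indices $i_1<\dots<i_r$, $\mathcal I=\{i_1,\dots,i_r\}$, such that rows $i_1,\dots,i_r$ of $\mathbf H_{\mathcal I}$ form $\mathbf I_r$ and column $j$ of $\mathbf H_{\mathcal I}$ is zero in all rows above row $i_j$. Let $\mathbf I_{\tilde{\mathcal I}}$ be the $m\times(m-r)$ matrix whose columns are the standard basis vectors $\mathbf e_i$ with $i\notin\mathcal I$, in increasing order of $i$, and put $\mathbf P_{\mathcal I}=[\mathbf H_{\mathcal I}\ \ \mathbf I_{\tilde{\mathcal I}}]\in\mathrm{GL}(m;2)$. (For $r=0$: $H=\{0\}$, $\mathbf P_{\mathcal I}=\mathbf I_m$.) For $\mathbf S_r\in\mathrm{Sym}(r;2)$, $\tilde{\mathbf S}_r\in\mathrm{Sym}(m;2)$ denotes the matrix with $\mathbf S_r$ as its upper-left $r\times r$ block and zeros elsewhere. Binary subspace chirps: let $f(\mathbf v,\mathbf w,r)=\prod_{i=r+1}^m(1+v_i+w_i)$ computed in $\mathbb F_2$ and viewed in $\{0,1\}$. For $\mathbf b\in\mathbb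 F_2^m$, the binary subspace chirp (BSSC) $\mathbf w_{\mathbf b}=\mathbf w^{H,\mathbf S_r}_{\mathbf b}\in\mathbb C^N$ has entries $\mathbf w_{\mathbf b}(\mathbf a)=2^{-r/2}\,i^{\mathbf u^T\tilde{\mathbf S}_r\mathbf u+2\mathbf b^T\mathbf u}\,f(\mathbf b,\mathbf u,r)$ with $\mathbf u=\mathbf P_{\mathcal I}^{-1}\mathbf a\in\mathbb F_2^m$, for $\mathbf a\in\mathbb F_2^m$. The integer $r$ is its rank. *)

theory Defs
  imports Complex_Main
begin

text \<open>Binary vectors in F_2^m are boolean lists of length m (index 0 .. m-1,
  i.e. coordinate i of the paper is list position i-1).  A vector of C^N, N = 2^m,
  is a function from boolean lists to complex numbers that vanishes off F_2^m.
  Matrices N x N are functions of two binary vectors, vanishing off F_2^m x F_2^m.\<close>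

definition bvecs :: "nat \<Rightarrow> bool list set" where
  "bvecs m = {v. length v = m}"

definition cvecs :: "nat \<Rightarrow> (bool list \<Rightarrow> complex) set" where
  "cvecs m = {\<psi>. \<forall>a. length a \<noteq> m \<longrightarrow> \<psi> a = 0}"

definition cnorm2 :: "nat \<Rightarrow> (bool list \<Rightarrow> complex) \<Rightarrow> real" where
  "cnorm2 m \<psi> = (\<Sum>a\<in>bvecs m. (cmod (\<psi> a))\<^sup>2)"

type_synonym cmat = "bool list \<Rightarrow> bool list \<Rightarrow> complex"

definition mmul :: "nat \<Rightarrow> cmat \<Rightarrow> cmat \<Rightarrow> cmat" where
  "mmul m A B = (\<lambda>u v. \<Sum>w\<in>bvecs m. A u w * B w v)"

definition mapply :: "nat \<Rightarrow> cmat \<Rightarrow> (bool list \<Rightarrow> complex) \<Rightarrow> (bool list \<Rightarrow> complex)" where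
  "mapply m A \<psi> = (\<lambda>u. \<Sum>v\<in>bvecs m. A u v * \<psi> v)"

definition mid :: "nat \<Rightarrow> cmat" where
  "mid m = (\<lambda>u v. if length u = m \<and> length v = m \<and> u = v then 1 else 0)"

definition bxor :: "bool list \<Rightarrow> bool list \<Rightarrow> bool list" where
  "bxor x y = map2 (\<lambda>p q. p \<noteq> q) x y"

text \<open>D(a,b) = sigma_x^a1 sigma_z^b1 (x) ... (x) sigma_x^am sigma_z^bm; its (u,v) entry
  is [u = v + a] (-1)^(b^T v).\<close>

definition Dmat :: "nat \<Rightarrow> bool list \<Rightarrow> bool list \<Rightarrow> cmat" where
  "Dmat m a b = (\<lambda>u v. if length u = m \<and> length v = m \<and> u = bxor v a
       then (-1::complex) ^ (\<Sum>i<m. of_bool (b ! i \<and> v ! i)) else 0)"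

definition HW :: "nat \<Rightarrow> cmat set" where
  "HW m = {E. \<exists>a b k. a \<in> bvecs m \<and> b \<in> bvecs m \<and> k < (4::nat) \<and>
              E = (\<lambda>u v. \<i> ^ k * Dmat m a b u v)}"

definition stabilizer_group :: "nat \<Rightarrow> cmat set \<Rightarrow> bool" where
  "stabilizer_group m S \<longleftrightarrow>
     S \<subseteq> HW m \<and> mid m \<in> S \<and>
     (\<forall>E\<in>S. \<forall>F\<in>S. mmul m E F \<in> S) \<and>
     (\<forall>E\<in>S. \<exists>F\<in>S. mmul m E F = mid m \<and> mmul m F E = mid m) \<and>
     (\<forall>E\<in>S. \<forall>F\<in>S. mmul m E F = mmul m F E) \<and>
     (\<lambda>u v. - mid m u v) \<notin> S"

definition maximal_stabilizer_group :: "nat \<Rightarrow> cmat set \<Rightarrow> bool" where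
  "maximal_stabilizer_group m S \<longleftrightarrow> stabilizer_group m S \<and> card S = 2 ^ m"

definition fixed_space :: "nat \<Rightarrow> cmat set \<Rightarrow> (bool list \<Rightarrow> complex) set" where
  "fixed_space m S = {\<psi> \<in> cvecs m. \<forall>E\<in>S. mapply m E \<psi> = \<psi>}"

definition stabilizer_state :: "nat \<Rightarrow> (bool list \<Rightarrow> complex) \<Rightarrow> bool" where
  "stabilizer_state m \<psi> \<longleftrightarrow>
     (\<exists>S. maximal_stabilizer_group m S \<and> \<psi> \<in> cvecs m \<and> cnorm2 m \<psi> = 1 \<and>
          fixed_space m S = {(\<lambda>a. c * \<psi> a) | c. True})"

text \<open>An m x r binary matrix H (entries H i j, i < m, j < r; other entries irrelevant)
  in column reduced echelon form with pivot list piv = [i_1, ..., i_r] (0-based,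
  strictly increasing).  Such matrices are exactly the matrices H_I for H in G(m,r;2).\<close>

definition is_cref :: "nat \<Rightarrow> nat \<Rightarrow> (nat \<Rightarrow> nat \<Rightarrow> bool) \<Rightarrow> nat list \<Rightarrow> bool" where
  "is_cref m r H piv \<longleftrightarrow>
     length piv = r \<and> sorted_wrt (<) piv \<and> (\<forall>j<r. piv ! j < m) \<and>
     (\<forall>j<r. \<forall>k<r. H (piv ! j) k = (j = k)) \<and>
     (\<forall>j<r. \<forall>i<piv ! j. \<not> H i j)"

definition nonpiv :: "nat \<Rightarrow> nat list \<Rightarrow> nat list" where
  "nonpiv m piv = filter (\<lambda>i. i \<notin> set piv) [0..<m]"

text \<open>P_I u for P_I = [H_I  I_~I]: coordinate i is the F_2-sum of
  H i j u_j (j < r) and of u_(r+k) where nonpiv!k = i.\<close>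

definition Pmul :: "nat \<Rightarrow> nat \<Rightarrow> (nat \<Rightarrow> nat \<Rightarrow> bool) \<Rightarrow> nat list \<Rightarrow> bool list \<Rightarrow> bool list" where
  "Pmul m r H piv u = map (\<lambda>i. odd (card {j. j < r \<and> H i j \<and> u ! j}
                                  + card {k. k < m - r \<and> nonpiv m piv ! k = i \<and> u ! (r + k)})) [0..<m]"

definition Pinv :: "nat \<Rightarrow> nat \<Rightarrow> (nat \<Rightarrow> nat \<Rightarrow> bool) \<Rightarrow> nat list \<Rightarrow> bool list \<Rightarrow> bool list" where
  "Pinv m r H piv a = (THE u. length u = m \<and> Pmul m r H piv u = a)"

text \<open>f(v,w,r) = prod_{i=r+1}^m (1 + v_i + w_i) in F_2 (0-based: i = r .. m-1).\<close>

definition ffun :: "nat \<Rightarrow> bool list \<Rightarrow> bool list \<Rightarrow> nat \<Rightarrow> int" where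
  "ffun m v w r = (\<Prod>i\<in>{r..<m}. (1 + of_bool (v ! i) + of_bool (w ! i)) mod 2)"

definition sym_bin :: "nat \<Rightarrow> (nat \<Rightarrow> nat \<Rightarrow> bool) \<Rightarrow> bool" where
  "sym_bin r S \<longleftrightarrow> (\<forall>j<r. \<forall>k<r. S j k = S k j)"

text \<open>The binary subspace chirp w_b^{H,S_r}.  The exponent u^T S~ u + 2 b^T u is
  evaluated in Z with binary entries lifted to 0,1.\<close>

definition bssc :: "nat \<Rightarrow> nat \<Rightarrow> (nat \<Rightarrow> nat \<Rightarrow> bool) \<Rightarrow> nat list \<Rightarrow> (nat \<Rightarrow> nat \<Rightarrow> bool)
                     \<Rightarrow> bool list \<Rightarrow> bool list \<Rightarrow> complex" where
  "bssc m r H piv S b a =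
     (if length a = m then
        (let u = Pinv m r H piv a;
             e = (\<Sum>j<r. \<Sum>k<r. of_bool (u ! j) * of_bool (S j k) * of_bool (u ! k))
                 + 2 * (\<Sum>i<m. of_bool (b ! i) * of_bool (u ! i)) :: nat
         in complex_of_real (1 / sqrt (2 ^ r)) * \<i> ^ e * of_int (ffun m b u r))
      else 0)"

end

theory Submission
  imports Defs
begin

text \<open>A binary subspace chirp is supported on the coset \<open>P\<^sub>I (F\<^sub>2\<^sup>r \<times> {b'})\<close>, where in the
  coordinates \<open>u = P\<^sub>I\<^sup>-\<^sup>1 a\<close> it is the quadratic phase \<open>\<i> ^ (u\<^sup>T S u + 2 b\<^sup>T u)\<close>.  For each
  of the \<open>2\<^sup>m\<close> pairs \<open>(y, t)\<close> some Pauli matrix with \<open>X\<close>-part \<open>P\<^sub>I (y, 0)\<close> fixes it: translating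
  by \<open>y\<close> changes the quadratic phase by the bilinear term \<open>(-1) ^ (u\<^sup>T S y)\<close>, which a suitable
  \<open>Z\<close>-part and global phase undo.  On the other hand, distinct elements of a stabilizer group are
  orthogonal for the Hilbert-Schmidt inner product, so Bessel's inequality applied to the rows of
  the sum of all group elements shows that a group with a fixed unit vector has at most \<open>2\<^sup>m\<close>
  elements, and exactly \<open>2\<^sup>m\<close> only if its fixed space is a line.  Hence the stabilizer of a
  chirp is maximal and the chirp is a stabilizer state.

  Conversely, the \<open>X\<close>-parts of a maximal stabilizer group form a subspace of \<open>F\<^sub>2\<^sup>m\<close>, and its
  column echelon basis gives \<open>H\<^sub>I\<close>.  The group elements with these \<open>X\<close>-parts force a fixed vector
  to satisfy, on a coset of the column space, the same one-step recursion as a chirp whose \<open>S\<close>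
  and \<open>b\<close> are read off from those elements; off the coset this chirp vanishes.  So the chirp is
  fixed by the whole group and is therefore a unimodular multiple of the stabilizer state.\<close>

lemma bvecs_finite[simp]: "finite (bvecs m)"
  unfolding bvecs_def using finite_lists_length_eq[of "UNIV::bool set" m] by simp

lemma bvecs_card: "card (bvecs m) = 2 ^ m"
  unfolding bvecs_def using card_lists_length_eq[of "UNIV::bool set" m] by simp

lemma in_bvecs[simp]: "v \<in> bvecs m \<longleftrightarrow> length v = m"
  by (simp add: bvecs_def)

lemma bxor_length[simp]: "length (bxor x y) = min (length x) (length y)"
  by (simp add: bxor_def)

lemma bxor_nth[simp]: "i < length x \<Longrightarrow> i < length y \<Longrightarrow> bxor x y ! i = (x ! i \<noteq> y ! i)"
  by (simp add: bxor_def)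

lemma bxor_eq_iff: "length x = length y \<Longrightarrow> length z = length y \<Longrightarrow> (x = bxor z y) \<longleftrightarrow> (z = bxor x y)"
  by (auto simp: list_eq_iff_nth_eq)

lemma bxor_assoc: "length x = length y \<Longrightarrow> length z = length y \<Longrightarrow> bxor (bxor x y) z = bxor x (bxor y z)"
  by (auto simp: list_eq_iff_nth_eq)

lemma bxor_comm: "bxor x y = bxor y x"
  by (auto simp: list_eq_iff_nth_eq)

lemma bxor_cancel: "length x = length y \<Longrightarrow> bxor (bxor x y) y = x"
  by (auto simp: list_eq_iff_nth_eq)

definition bdot :: "nat \<Rightarrow> bool list \<Rightarrow> bool list \<Rightarrow> nat" where
  "bdot m b v = (\<Sum>i<m. of_bool (b ! i \<and> v ! i))"

lemma minus_one_power_sum_of_bool: "(-1::complex) ^ (\<Sum>i\<in>A. of_bool (P i)) = (\<Prod>i\<in>A. if P i then -1 else 1)"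
  unfolding power_sum by (rule prod.cong) auto

lemma sign_bdot_bxor_right: "length v = m \<Longrightarrow> length a = m \<Longrightarrow>
   (-1::complex) ^ bdot m b (bxor v a) = (-1) ^ bdot m b v * (-1) ^ bdot m b a"
  unfolding bdot_def minus_one_power_sum_of_bool prod.distrib[symmetric]
  by (rule prod.cong) auto

lemma sign_bdot_bxor_left: "length b = m \<Longrightarrow> length b' = m \<Longrightarrow>
   (-1::complex) ^ bdot m (bxor b b') v = (-1) ^ bdot m b v * (-1) ^ bdot m b' v"
  unfolding bdot_def minus_one_power_sum_of_bool prod.distrib[symmetric]
  by (rule prod.cong) auto

lemma bdot_comm: "bdot m b v = bdot m v b"
  unfolding bdot_def by (rule sum.cong) auto

lemma Dmat_alt: "Dmat m a b = (\<lambda>u v. if length u = m \<and> length v = m \<and> u = bxor v a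
       then (-1::complex) ^ bdot m b v else 0)"
  unfolding Dmat_def bdot_def by simp

definition zvec :: "nat \<Rightarrow> bool list" where "zvec m = replicate m False"

definition evec :: "nat \<Rightarrow> nat \<Rightarrow> bool list" where "evec m j = (replicate m False)[j := True]"

lemma zvec_len[simp]: "length (zvec m) = m" by (simp add: zvec_def)
lemma evec_len[simp]: "length (evec m j) = m" by (simp add: evec_def)
lemma evec_nth[simp]: "i < m \<Longrightarrow> evec m j ! i = (i = j)" by (cases "j < m") (auto simp: evec_def nth_list_update)
lemma zvec_nth[simp]: "i < m \<Longrightarrow> zvec m ! i = False" by (simp add: zvec_def)

lemma bdot_zvec_right[simp]: "bdot m b (zvec m) = 0" by (simp add: bdot_def)
lemma bdot_zvec_left[simp]: "bdot m (zvec m) b = 0" by (simp add: bdot_def)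
lemma bdot_evec: "j < m \<Longrightarrow> bdot m b (evec m j) = of_bool (b ! j)"
proof -
  assume j: "j < m"
  have "bdot m b (evec m j) = (\<Sum>i<m. if i = j then of_bool (b ! j) else 0)"
    unfolding bdot_def by (rule sum.cong) auto
  also have "\<dots> = of_bool (b ! j)" using j by (simp add: sum.delta)
  finally show ?thesis .
qed

lemma bxor_zvec_right[simp]: "length x = m \<Longrightarrow> bxor x (zvec m) = x"
  by (auto simp: list_eq_iff_nth_eq)
lemma bxor_zvec_left[simp]: "length x = m \<Longrightarrow> bxor (zvec m) x = x"
  by (auto simp: list_eq_iff_nth_eq)
lemma bxor_self_zvec[simp]: "length x = m \<Longrightarrow> bxor x x = zvec m"
  by (auto simp: list_eq_iff_nth_eq)

lemma bool_list_flip_induct[consumes 1, case_names zvec flip]: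
  assumes "length y = r"
    and zvec: "P (zvec r)"
    and flip: "\<And>y n. n < r \<Longrightarrow> length y = r \<Longrightarrow> \<not> y ! n \<Longrightarrow> P y \<Longrightarrow> P (y[n := True])"
  shows "P y"
proof -
  have "\<forall>y. length y = r \<and> (\<forall>l. k \<le> l \<and> l < r \<longrightarrow> \<not> y ! l) \<longrightarrow> P y" for k
  proof (induction k)
    case 0
    have "y = zvec r" if "length y = r" "\<forall>l<r. \<not> y ! l" for y
      using that by (auto simp: list_eq_iff_nth_eq)
    thus ?case using zvec by auto
  next
    case (Suc k)
    show ?case
    proof (intro allI impI)
      fix y assume h: "length y = r \<and> (\<forall>l. Suc k \<le> l \<and> l < r \<longrightarrow> \<not> y ! l)"
      show "P y"
      proof (cases "k < r \<and> y ! k")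
        case False
        hence "\<forall>l. k \<le> l \<and> l < r \<longrightarrow> \<not> y ! l" using h by (metis le_eq_less_or_eq Suc_leI)
        thus ?thesis using Suc.IH h by blast
      next
        case True
        have "P (y[k := False])" using Suc.IH h by (auto simp: nth_list_update)
        moreover have "(y[k := False])[k := True] = y" using True by (simp add: list_update_id[of y k, simplified True])
        ultimately show ?thesis using flip[of k "y[k := False]"] True h by simp
      qed
    qed
  qed
  from this[of r] show ?thesis using assms(1) by auto
qed

lemma sum_sign_bdot: assumes c: "length c = m"
  shows "(\<Sum>v\<in>bvecs m. (-1::complex) ^ bdot m c v) = (if c = zvec m then 2 ^ m else 0)"
proof (cases "c = zvec m")
  case True thus ?thesis by (simp add: bvecs_card)
next
  case False
  then obtain j where j: "j < m" "c ! j" using c by (auto simp: list_eq_iff_nth_eq)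
  let ?s = "\<lambda>v. bxor v (evec m j)"
  have bij: "bij_betw ?s (bvecs m) (bvecs m)"
    by (rule bij_betw_byWitness[where f'="?s"]) (auto simp: bxor_cancel image_def intro!: exI[of _ "bxor _ (evec m j)"] bxor_cancel[symmetric])
  have "(\<Sum>v\<in>bvecs m. (-1::complex) ^ bdot m c v) = (\<Sum>v\<in>bvecs m. (-1::complex) ^ bdot m c (?s v))"
    using sum.reindex_bij_betw[OF bij, of "\<lambda>v. (-1::complex) ^ bdot m c v"] by simp
  also have "\<dots> = - (\<Sum>v\<in>bvecs m. (-1::complex) ^ bdot m c v)"
    by (simp add: sign_bdot_bxor_right bdot_evec j sum_negf[symmetric])
  finally show ?thesis using False by simp
qed

definition bsign :: "bool \<Rightarrow> complex" where "bsign b = (if b then -1 else 1)"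

lemma bsign_neq: "bsign (p \<noteq> q) = bsign p * bsign q" by (simp add: bsign_def)
lemma bsign_card: "finite A \<Longrightarrow> (-1::complex) ^ card {x\<in>A. P x} = (\<Prod>x\<in>A. bsign (P x))"
proof -
  assume fin: "finite A"
  have "card {x\<in>A. P x} = (\<Sum>x\<in>{x\<in>A. P x}. 1)" by (rule card_eq_sum)
  also have "\<dots> = (\<Sum>x\<in>A. if P x then 1 else 0)" by (rule sum.inter_filter[OF fin])
  finally have "card {x\<in>A. P x} = (\<Sum>x\<in>A. if P x then 1 else 0)" .
  hence "card {x\<in>A. P x} = (\<Sum>x\<in>A. of_bool (P x))" by (simp add: of_bool_def)
  thus ?thesis by (simp add: minus_one_power_sum_of_bool bsign_def)
qed
lemma bsign_odd: "bsign (odd n) = (-1) ^ n" by (simp add: bsign_def)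
lemma bsign_square: "bsign p * bsign p = 1" by (simp add: bsign_def)
lemma bsign_eq_iff: "bsign p = bsign q \<longleftrightarrow> p = q" by (simp add: bsign_def)
lemma sign_bdot_prod: "(-1::complex) ^ bdot m b v = (\<Prod>i<m. bsign (b ! i \<and> v ! i))"
  unfolding bdot_def minus_one_power_sum_of_bool bsign_def ..

lemma card_lt_bsign: "(-1::complex) ^ card {j. j < (r::nat) \<and> P j} = (\<Prod>j<r. bsign (P j))"
proof -
  have e: "{j. j < r \<and> P j} = {j\<in>{..<r}. P j}" by auto
  have "(-1::complex) ^ card {j\<in>{..<r}. P j} = (\<Prod>j<r. bsign (P j))" by (rule bsign_card) simp
  thus ?thesis unfolding e .
qed

lemma bsign_conj_neq: "bsign (p \<and> (a \<noteq> b)) = bsign (p \<and> a) * bsign (p \<and> b)" by (simp add: bsign_def)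
lemma bsign_False[simp]: "bsign False = 1" by (simp add: bsign_def)
lemma bsign_True[simp]: "bsign True = -1" by (simp add: bsign_def)

lemma prod_lessThan_add: "(\<Prod>l<r + (n::nat). (f l :: complex)) = (\<Prod>l<r. f l) * (\<Prod>k<n. f (r + k))"
  by (induction n) (simp_all add: mult.assoc)

lemma i_power_mod4: "\<i> ^ n = \<i> ^ (n mod 4)"
proof -
  have "\<i> ^ n = \<i> ^ (4 * (n div 4) + n mod 4)" by simp
  also have "\<dots> = (\<i> ^ 4) ^ (n div 4) * \<i> ^ (n mod 4)" by (simp only: power_add power_mult)
  finally show ?thesis by simp
qed

lemma exists_complement_mod4: "\<exists>k'<4. (n + k') mod 4 = (0::nat)"
proof -
  have e: "\<And>k. (n + k) mod 4 = (n mod 4 + k) mod 4" by (simp add: mod_add_left_eq)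
  have "n mod 4 < 4" by simp
  hence "n mod 4 = 0 \<or> n mod 4 = 1 \<or> n mod 4 = 2 \<or> n mod 4 = 3" by auto
  thus ?thesis
  proof (elim disjE)
    assume h: "n mod 4 = 0" show ?thesis by (rule exI[of _ 0]) (simp only: e h, simp)
  next
    assume h: "n mod 4 = 1" show ?thesis by (rule exI[of _ 3]) (simp only: e h, simp)
  next
    assume h: "n mod 4 = 2" show ?thesis by (rule exI[of _ 2]) (simp only: e h, simp)
  next
    assume h: "n mod 4 = 3" show ?thesis by (rule exI[of _ 1]) (simp only: e h, simp)
  qed
qed

lemma i_power_bsign_split: assumes "q < 4" shows "\<i> ^ (of_bool (odd q)) * bsign (2 \<le> q) = \<i> ^ q"
proof -
  have "q = 0 \<or> q = 1 \<or> q = 2 \<or> q = 3" using assms by auto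
  moreover have "\<i> ^ 3 = - \<i>" by (simp add: power3_eq_cube)
  ultimately show ?thesis by (elim disjE) (simp_all add: bsign_def)
qed

lemma minus_one_power_eq_i_power: "(-1::complex) ^ n = \<i> ^ (2 * n)"
  by (simp add: power_mult)

definition ipow :: "int \<Rightarrow> complex" where "ipow z = \<i> ^ nat (z mod 4)"

lemma ipow_eq: assumes "int n mod 4 = z mod 4" shows "ipow z = \<i> ^ n"
proof -
  have "int (n mod 4) = int n mod 4" by (simp add: zmod_int)
  hence "n mod 4 = nat (z mod 4)" using assms by linarith
  thus ?thesis unfolding ipow_def using i_power_mod4[of n] by simp
qed

lemma ipow_of_nat: "ipow (int n) = \<i> ^ n" by (rule ipow_eq) simp

lemma ipow_add: "ipow (a + b) = ipow a * ipow b"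
proof -
  have "int (nat (a mod 4) + nat (b mod 4)) = a mod 4 + b mod 4" by simp
  hence "int (nat (a mod 4) + nat (b mod 4)) mod 4 = (a + b) mod 4" by (simp add: mod_add_eq)
  hence "ipow (a + b) = \<i> ^ (nat (a mod 4) + nat (b mod 4))" by (rule ipow_eq)
  thus ?thesis unfolding ipow_def by (simp add: power_add)
qed

lemma ipow_4: "ipow (4 * z) = 1" unfolding ipow_def by simp

lemma ipow_2: "ipow (2 * int n) = (-1) ^ n"
proof -
  have "ipow (2 * int n) = ipow (int (2 * n))" by simp
  also have "\<dots> = \<i> ^ (2 * n)" by (rule ipow_of_nat)
  finally show ?thesis by (simp add: power_mult)
qed

section \<open>Pauli matrices\<close>

definition pauli :: "nat \<Rightarrow> nat \<Rightarrow> bool list \<Rightarrow> bool list \<Rightarrow> cmat" where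
  "pauli m k a b = (\<lambda>u v. \<i> ^ k * Dmat m a b u v)"

lemma HW_eq_pauli: "HW m = {pauli m k a b | a b k. length a = m \<and> length b = m \<and> k < 4}"
  unfolding HW_def pauli_def by auto

lemma mapply_pauli: assumes "length u = m" "length a = m"
  shows "mapply m (pauli m k a b) \<psi> u = \<i> ^ k * (-1) ^ bdot m b (bxor u a) * \<psi> (bxor u a)"
proof -
  have "mapply m (pauli m k a b) \<psi> u = (\<Sum>v\<in>bvecs m. if v = bxor u a then \<i> ^ k * (-1) ^ bdot m b v * \<psi> v else 0)"
    unfolding mapply_def pauli_def Dmat_alt using assms
    by (intro sum.cong) (auto simp: bxor_eq_iff)
  also have "\<dots> = \<i> ^ k * (-1) ^ bdot m b (bxor u a) * \<psi> (bxor u a)"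
    using assms by (simp add: sum.delta')
  finally show ?thesis .
qed

lemma mapply_pauli_outside: "length u \<noteq> m \<Longrightarrow> mapply m (pauli m k a b) \<psi> u = 0"
  unfolding mapply_def pauli_def Dmat_alt by simp

lemma mmul_Dmat: assumes "length a = m" "length b = m" "length a' = m" "length b' = m"
  shows "mmul m (Dmat m a b) (Dmat m a' b') = (\<lambda>u v. (-1) ^ bdot m b a' * Dmat m (bxor a a') (bxor b b') u v)"
proof (intro ext)
  fix u v
  show "mmul m (Dmat m a b) (Dmat m a' b') u v = (-1) ^ bdot m b a' * Dmat m (bxor a a') (bxor b b') u v"
  proof (cases "length v = m")
    case False thus ?thesis unfolding mmul_def Dmat_alt by simp
  next
    case True
    have "mmul m (Dmat m a b) (Dmat m a' b') u v = (\<Sum>w\<in>bvecs m. if w = bxor v a' then Dmat m a b u w * (-1) ^ bdot m b' v else 0)"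
      unfolding mmul_def using True assms
      by (intro sum.cong) (auto simp: Dmat_alt bxor_eq_iff)
    also have "\<dots> = Dmat m a b u (bxor v a') * (-1) ^ bdot m b' v"
      using True assms by (simp add: sum.delta')
    also have "\<dots> = (-1) ^ bdot m b a' * Dmat m (bxor a a') (bxor b b') u v"
      using True assms by (auto simp: Dmat_alt bxor_assoc bxor_comm[of a' a] sign_bdot_bxor_left sign_bdot_bxor_right bdot_comm[of m b'] bdot_comm[of m b])
    finally show ?thesis .
  qed
qed

lemma mmul_scaled: "mmul m (\<lambda>u v. c * A u v) (\<lambda>u v. d * B u v) = (\<lambda>u v. (c * d) * mmul m A B u v)"
  unfolding mmul_def by (auto simp: sum_distrib_left intro!: ext sum.cong)

lemma mmul_pauli_Dmat: assumes "length a = m" "length b = m" "length a' = m" "length b' = m"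
  shows "mmul m (pauli m k a b) (pauli m k' a' b') = (\<lambda>u v. (\<i> ^ (k + k') * (-1) ^ bdot m b a') * Dmat m (bxor a a') (bxor b b') u v)"
  unfolding pauli_def mmul_scaled mmul_Dmat[OF assms] by (auto simp: power_add mult.assoc)

lemma Dmat_zvec: "Dmat m (zvec m) (zvec m) = mid m"
  unfolding Dmat_alt mid_def by (auto intro!: ext)

lemma scaled_Dmat_eq_imp: assumes l: "length a = m" "length b = m" "length a' = m" "length b' = m"
  and c: "c \<noteq> 0" and eq: "\<And>u v. c * Dmat m a b u v = c' * Dmat m a' b' u v"
  shows "a = a' \<and> b = b' \<and> c = c'"
proof -
  have e1: "c * Dmat m a b a (zvec m) = c' * Dmat m a' b' a (zvec m)" by (rule eq)
  have aa: "a = a'" using e1 c l by (auto simp: Dmat_alt split: if_splits)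
  hence cc: "c = c'" using e1 c l by (auto simp: Dmat_alt)
  have bb: "b = b'"
  proof (rule ccontr)
    assume "b \<noteq> b'"
    then obtain j where j: "j < m" "b ! j \<noteq> b' ! j" using l by (auto simp: list_eq_iff_nth_eq)
    have "c * Dmat m a b (bxor (evec m j) a) (evec m j) = c' * Dmat m a' b' (bxor (evec m j) a) (evec m j)" by (rule eq)
    thus False using j c l aa cc by (auto simp: Dmat_alt bdot_evec)
  qed
  show ?thesis using aa bb cc by simp
qed

definition hs_inner :: "nat \<Rightarrow> cmat \<Rightarrow> cmat \<Rightarrow> complex" where
  "hs_inner m A B = (\<Sum>u\<in>bvecs m. \<Sum>v\<in>bvecs m. A u v * cnj (B u v))"

lemma hs_inner_Dmat: assumes l: "length a = m" "length b = m" "length a' = m" "length b' = m"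
  shows "hs_inner m (Dmat m a b) (Dmat m a' b') = (if a = a' \<and> b = b' then 2 ^ m else 0)"
proof -
  have "hs_inner m (Dmat m a b) (Dmat m a' b') = (\<Sum>v\<in>bvecs m. \<Sum>u\<in>bvecs m. Dmat m a b u v * cnj (Dmat m a' b' u v))"
    unfolding hs_inner_def by (rule sum.swap)
  also have "\<dots> = (\<Sum>v\<in>bvecs m. if a = a' then (-1) ^ bdot m (bxor b b') v else 0)"
  proof (rule sum.cong[OF refl])
    fix v assume v: "v \<in> bvecs m"
    have "(\<Sum>u\<in>bvecs m. Dmat m a b u v * cnj (Dmat m a' b' u v)) =
          (\<Sum>u\<in>bvecs m. if u = bxor v a then (if a = a' then (-1) ^ bdot m (bxor b b') v else 0) else 0)"
    proof (rule sum.cong[OF refl])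
      fix u assume u: "u \<in> bvecs m"
      have "a = a'" if "bxor v a = bxor v a'" using that l v
        by (metis bxor_cancel bxor_comm in_bvecs)
      thus "Dmat m a b u v * cnj (Dmat m a' b' u v) = (if u = bxor v a then (if a = a' then (-1) ^ bdot m (bxor b b') v else 0) else 0)"
        using u v l by (auto simp: Dmat_alt sign_bdot_bxor_left)
    qed
    also have "\<dots> = (if a = a' then (-1) ^ bdot m (bxor b b') v else 0)"
      using v l by (simp add: sum.delta')
    finally show "(\<Sum>u\<in>bvecs m. Dmat m a b u v * cnj (Dmat m a' b' u v)) = (if a = a' then (-1) ^ bdot m (bxor b b') v else 0)" .
  qed
  also have "\<dots> = (if a = a' \<and> b = b' then 2 ^ m else 0)"
  proof -
    have "b = b'" if "bxor b b' = zvec m" using that l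
      by (metis bxor_cancel bxor_zvec_left bxor_comm)
    thus ?thesis using l by (cases "a = a'") (auto simp: sum_sign_bdot bvecs_card)
  qed
  finally show ?thesis .
qed

lemma scaled_Dmat_eq_pauli: "(\<lambda>u v. \<i> ^ n * Dmat m a b u v) = pauli m (n mod 4) a b"
  unfolding pauli_def by (subst i_power_mod4) simp

lemma mapply_mmul: "mapply m (mmul m A B) \<psi> = mapply m A (mapply m B \<psi>)"
  unfolding mapply_def mmul_def
  by (auto intro!: ext simp: sum_distrib_left sum_distrib_right mult.assoc intro: sum.swap)

lemma mapply_mid: "\<psi> \<in> cvecs m \<Longrightarrow> mapply m (mid m) \<psi> = \<psi>"
proof (rule ext)
  fix u assume psi: "\<psi> \<in> cvecs m"
  show "mapply m (mid m) \<psi> u = \<psi> u"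
  proof (cases "length u = m")
    case True thus ?thesis unfolding mapply_def mid_def
      by (simp add: if_distrib[of "\<lambda>x. x * _"] sum.delta cong: if_cong)
  next
    case False thus ?thesis using psi unfolding mapply_def mid_def cvecs_def by simp
  qed
qed

lemma mid_eq_pauli: "mid m = pauli m 0 (zvec m) (zvec m)"
  unfolding pauli_def Dmat_zvec by simp

lemma pauli_in_HW: "length a = m \<Longrightarrow> length b = m \<Longrightarrow> k < 4 \<Longrightarrow> pauli m k a b \<in> HW m"
  unfolding HW_eq_pauli by blast

lemma mid_HW: "mid m \<in> HW m" unfolding mid_eq_pauli by (rule pauli_in_HW) auto

lemma mmul_pauli: assumes "length a = m" "length b = m" "length a' = m" "length b' = m"
  shows "mmul m (pauli m k a b) (pauli m k' a' b') = pauli m ((k + k' + 2 * bdot m b a') mod 4) (bxor a a') (bxor b b')"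
  unfolding mmul_pauli_Dmat[OF assms] minus_one_power_eq_i_power power_add[symmetric] scaled_Dmat_eq_pauli[symmetric] by simp

lemma mapply_scaled_matrix: "mapply m (\<lambda>u v. c * A u v) \<psi> = (\<lambda>u. c * mapply m A \<psi> u)"
  unfolding mapply_def by (simp add: sum_distrib_left mult.assoc)

lemma mmul_pauli_swap: assumes "length a = m" "length b = m" "length a' = m" "length b' = m"
  shows "mmul m (pauli m k a b) (pauli m k' a' b')
    = (\<lambda>u v. (-1) ^ (bdot m b a' + bdot m b' a) * mmul m (pauli m k' a' b') (pauli m k a b) u v)"
proof -
  have "(-1::complex) ^ bdot m b a' = (-1) ^ (bdot m b a' + bdot m b' a) * (-1) ^ bdot m b' a"
    by (simp add: power_add mult.assoc flip: power2_eq_square power_mult)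
  thus ?thesis unfolding mmul_pauli_Dmat[OF assms] mmul_pauli_Dmat[OF assms(3,4,1,2)]
    by (simp add: bxor_comm[of a' a] bxor_comm[of b' b] add.commute mult.assoc mult.left_commute)
qed

lemma pauli_inverse: assumes "length a = m" "length b = m"
  obtains k' where "k' < 4" "mmul m (pauli m k a b) (pauli m k' a b) = mid m"
    "mmul m (pauli m k' a b) (pauli m k a b) = mid m"
proof -
  from exists_complement_mod4[of "k + 2 * bdot m b a"]
  obtain k' where k': "k' < 4" "(k + 2 * bdot m b a + k') mod 4 = 0" by (elim exE conjE)
  have e: "k + k' + 2 * bdot m b a = k + 2 * bdot m b a + k'" "k' + k + 2 * bdot m b a = k + 2 * bdot m b a + k'"
    by (simp_all only: ac_simps)
  show ?thesis
  proof (rule that[OF k'(1)])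
    show "mmul m (pauli m k a b) (pauli m k' a b) = mid m" "mmul m (pauli m k' a b) (pauli m k a b) = mid m"
      unfolding mmul_pauli[OF assms assms] mid_eq_pauli e k'(2) using assms by simp_all
  qed
qed

lemma hs_inner_scal: "hs_inner m (\<lambda>u v. c * A u v) (\<lambda>u v. d * B u v) = c * cnj d * hs_inner m A B"
  unfolding hs_inner_def by (simp add: sum_distrib_left algebra_simps)

lemma hs_inner_pauli: assumes "length a = m" "length b = m" "length a' = m" "length b' = m"
  shows "hs_inner m (pauli m k a b) (pauli m k' a' b') = (if a = a' \<and> b = b' then \<i>^k * cnj (\<i>^k') * 2 ^ m else 0)"
  unfolding pauli_def hs_inner_scal hs_inner_Dmat[OF assms] by simp

lemma hs_inner_pauli_self: assumes "length a = m" "length b = m"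
  shows "hs_inner m (pauli m k a b) (pauli m k a b) = 2 ^ m"
proof -
  have "\<i> ^ k * cnj (\<i> ^ k) = 1"
    by (simp add: power_mult_distrib[symmetric])
  thus ?thesis using hs_inner_pauli[OF assms assms, of k k] by simp
qed

lemma mmul_mid_mid: "mmul m (mid m) (mid m) = mid m"
proof (intro ext)
  fix u v
  show "mmul m (mid m) (mid m) u v = mid m u v"
  proof (cases "length u = m \<and> u = v")
    case True
    thus ?thesis unfolding mmul_def mid_def by (simp add: if_distrib[of "\<lambda>x. x * _"] sum.delta cong: if_cong)
  next
    case False
    thus ?thesis unfolding mmul_def mid_def by (auto intro!: sum.neutral)
  qed
qed

lemma mmul_scaled_left: "mmul m (\<lambda>u v. c * A u v) B = (\<lambda>u v. c * mmul m A B u v)"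
  unfolding mmul_def by (auto simp: sum_distrib_left algebra_simps intro!: ext sum.cong)

section \<open>Stabilizer groups and their fixed spaces\<close>

lemma stabilizer_scalar_mid: assumes S: "stabilizer_group m S" and c: "(\<lambda>u v. \<i> ^ d * mid m u v) \<in> S"
  shows "d mod 4 = 0"
proof (rule ccontr)
  assume d: "d mod 4 \<noteq> 0"
  have neg: "(\<lambda>u v. - mid m u v) \<notin> S" using S by (simp add: stabilizer_group_def)
  have i_d: "\<i> ^ d = \<i> ^ (d mod 4)" by (rule i_power_mod4)
  have "d mod 4 = 2 \<or> d mod 4 = 1 \<or> d mod 4 = 3" using d by presburger
  then consider "d mod 4 = 2" | "d mod 4 = 1 \<or> d mod 4 = 3" by blast
  thus False
  proof cases
    assume "d mod 4 = 2"
    hence "(\<lambda>u v. \<i> ^ d * mid m u v) = (\<lambda>u v. - mid m u v)" using i_d by simp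
    thus False using c neg by simp
  next
    assume odd_d: "d mod 4 = 1 \<or> d mod 4 = 3"
    have "\<i> ^ 3 = - \<i>" by (simp add: power3_eq_cube)
    hence "\<i> ^ d * \<i> ^ d = -1" using odd_d by (elim disjE) (simp_all add: i_d)
    hence "mmul m (\<lambda>u v. \<i> ^ d * mid m u v) (\<lambda>u v. \<i> ^ d * mid m u v) = (\<lambda>u v. - mid m u v)"
      unfolding mmul_scaled mmul_mid_mid by simp
    moreover have "mmul m (\<lambda>u v. \<i> ^ d * mid m u v) (\<lambda>u v. \<i> ^ d * mid m u v) \<in> S"
      using S c by (simp add: stabilizer_group_def)
    ultimately show False using neg by simp
  qed
qed

lemma stabilizer_hs_orthogonal: assumes S: "stabilizer_group m S" and E: "E \<in> S" and F: "F \<in> S" and ne: "E \<noteq> F"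
  shows "hs_inner m E F = 0"
proof -
  have SH: "S \<subseteq> HW m" using S by (simp add: stabilizer_group_def)
  obtain k a b where Ed: "E = pauli m k a b" "length a = m" "length b = m" "k < 4" using E SH HW_eq_pauli by blast
  obtain k' a' b' where Fd: "F = pauli m k' a' b'" "length a' = m" "length b' = m" "k' < 4" using F SH HW_eq_pauli by blast
  show ?thesis
  proof (cases "a = a' \<and> b = b'")
    case False thus ?thesis using Ed Fd hs_inner_pauli by simp
  next
    case True
    define d where "d = (k + 4 - k') mod 4"
    have k4: "k \<in> {0,1,2,3}" "k' \<in> {0,1,2,3}" using Ed(4) Fd(4) by auto
    have "k \<noteq> k'" using ne Ed Fd True by auto
    hence "d mod 4 \<noteq> 0" using k4 unfolding d_def by auto
    have "(d + k') mod 4 = k" unfolding d_def using k4 by auto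
    hence "\<i> ^ k = \<i> ^ d * \<i> ^ k'" unfolding power_add[symmetric] by (metis i_power_mod4)
    hence EF: "E = (\<lambda>u v. \<i> ^ d * F u v)" using Ed Fd True by (auto simp: pauli_def intro!: ext)
    obtain G where G: "G \<in> S" "mmul m F G = mid m" using S F by (auto simp: stabilizer_group_def)
    have "mmul m E G = (\<lambda>u v. \<i> ^ d * mid m u v)" unfolding EF mmul_scaled_left G(2) ..
    moreover have "\<forall>E\<in>S. \<forall>F\<in>S. mmul m E F \<in> S" using S by (simp add: stabilizer_group_def)
    ultimately have "(\<lambda>u v. \<i> ^ d * mid m u v) \<in> S" using E G(1) by metis
    thus ?thesis using stabilizer_scalar_mid[OF S] \<open>d mod 4 \<noteq> 0\<close> by simp
  qed
qed

lemma HW_finite: "finite (HW m)"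
proof -
  have "HW m \<subseteq> (\<lambda>(k,a,b). pauli m k a b) ` ({..<4} \<times> bvecs m \<times> bvecs m)"
  proof
    fix E assume "E \<in> HW m"
    then obtain k a b where "E = pauli m k a b" "length a = m" "length b = m" "k < 4" unfolding HW_eq_pauli by blast
    thus "E \<in> (\<lambda>(k,a,b). pauli m k a b) ` ({..<4} \<times> bvecs m \<times> bvecs m)"
      by (intro image_eqI[of _ _ "(k,a,b)"]) auto
  qed
  thus ?thesis by (rule finite_subset) auto
qed

lemma sum_norm_sum_stabilizer: assumes fin: "finite S" and SH: "S \<subseteq> HW m"
  and orth: "\<And>E F. E \<in> S \<Longrightarrow> F \<in> S \<Longrightarrow> E \<noteq> F \<Longrightarrow> hs_inner m E F = 0"
  shows "(\<Sum>u\<in>bvecs m. \<Sum>v\<in>bvecs m. (cmod (\<Sum>E\<in>S. E u v))\<^sup>2) = real (card S) * 2 ^ m"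
proof -
  have "complex_of_real (\<Sum>u\<in>bvecs m. \<Sum>v\<in>bvecs m. (cmod (\<Sum>E\<in>S. E u v))\<^sup>2)
     = (\<Sum>u\<in>bvecs m. \<Sum>v\<in>bvecs m. (\<Sum>E\<in>S. E u v) * cnj (\<Sum>F\<in>S. F u v))"
    unfolding of_real_sum complex_norm_square ..
  also have "\<dots> = (\<Sum>u\<in>bvecs m. \<Sum>v\<in>bvecs m. \<Sum>E\<in>S. \<Sum>F\<in>S. E u v * cnj (F u v))"
    by (simp add: cnj_sum sum_product)
  also have "\<dots> = (\<Sum>u\<in>bvecs m. \<Sum>E\<in>S. \<Sum>v\<in>bvecs m. \<Sum>F\<in>S. E u v * cnj (F u v))"
    by (rule sum.cong[OF refl], rule sum.swap)
  also have "\<dots> = (\<Sum>u\<in>bvecs m. \<Sum>E\<in>S. \<Sum>F\<in>S. \<Sum>v\<in>bvecs m. E u v * cnj (F u v))"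
    by (intro sum.cong refl, rule sum.swap)
  also have "\<dots> = (\<Sum>E\<in>S. \<Sum>u\<in>bvecs m. \<Sum>F\<in>S. \<Sum>v\<in>bvecs m. E u v * cnj (F u v))"
    by (rule sum.swap)
  also have "\<dots> = (\<Sum>E\<in>S. \<Sum>F\<in>S. hs_inner m E F)"
    unfolding hs_inner_def by (intro sum.cong refl, rule sum.swap)
  also have "\<dots> = (\<Sum>E\<in>S. hs_inner m E E)"
  proof (rule sum.cong[OF refl])
    fix E assume E: "E \<in> S"
    have "(\<Sum>F\<in>S. hs_inner m E F) = (\<Sum>F\<in>S. if F = E then hs_inner m E E else 0)"
      by (rule sum.cong) (auto dest: orth[OF E])
    thus "(\<Sum>F\<in>S. hs_inner m E F) = hs_inner m E E" using fin E by (simp add: sum.delta')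
  qed
  also have "\<dots> = (\<Sum>E\<in>S. 2 ^ m)"
  proof (rule sum.cong[OF refl])
    fix E assume "E \<in> S"
    then obtain k a b where "E = pauli m k a b" "length a = m" "length b = m" using SH HW_eq_pauli by blast
    thus "hs_inner m E E = 2 ^ m" using hs_inner_pauli_self by simp
  qed
  also have "\<dots> = complex_of_real (real (card S) * 2 ^ m)" by simp
  finally show ?thesis using of_real_eq_iff by blast
qed

definition cinner :: "'a set \<Rightarrow> ('a \<Rightarrow> complex) \<Rightarrow> ('a \<Rightarrow> complex) \<Rightarrow> complex" where
  "cinner A f g = (\<Sum>x\<in>A. cnj (f x) * g x)"

lemma cinner_diff_l: "cinner A (\<lambda>x. f x - g x) h = cinner A f h - cinner A g h"
  unfolding cinner_def by (simp add: algebra_simps sum_subtractf)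
lemma cinner_diff_r: "cinner A h (\<lambda>x. f x - g x) = cinner A h f - cinner A h g"
  unfolding cinner_def by (simp add: algebra_simps sum_subtractf)
lemma cinner_scal_l: "cinner A (\<lambda>x. c * f x) h = cnj c * cinner A f h"
  unfolding cinner_def by (simp add: algebra_simps sum_distrib_left)
lemma cinner_scal_r: "cinner A h (\<lambda>x. c * f x) = c * cinner A h f"
  unfolding cinner_def by (simp add: algebra_simps sum_distrib_left)
lemma cinner_cnj: "cinner A g f = cnj (cinner A f g)"
  unfolding cinner_def by (simp add: mult.commute)
lemma cinner_self: "cinner A f f = complex_of_real (\<Sum>x\<in>A. (cmod (f x))\<^sup>2)"
  unfolding cinner_def of_real_sum complex_norm_square by (simp add: mult.commute)

lemma bessel_two_vectors:
  assumes g1: "cinner A g1 g1 = 1" and g2: "cinner A g2 g2 = 1" and g12: "cinner A g1 g2 = 0"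
  shows "(cmod (cinner A g1 f))\<^sup>2 + (cmod (cinner A g2 f))\<^sup>2 \<le> (\<Sum>x\<in>A. (cmod (f x))\<^sup>2)"
proof -
  define c1 where "c1 = cinner A g1 f"
  define c2 where "c2 = cinner A g2 f"
  define h where "h = (\<lambda>x. f x - c1 * g1 x - c2 * g2 x)"
  have g21: "cinner A g2 g1 = 0" using g12 cinner_cnj[of A g2 g1] by simp
  have f1: "cinner A f g1 = cnj c1" unfolding c1_def by (simp add: cinner_cnj[of A f])
  have f2: "cinner A f g2 = cnj c2" unfolding c2_def by (simp add: cinner_cnj[of A f])
  have "cinner A h h = cinner A f f - c1 * cnj c1 - c2 * cnj c2"
    unfolding h_def cinner_diff_l cinner_diff_r cinner_scal_l cinner_scal_r
    by (simp add: g1 g2 g12 g21 f1 f2 c1_def[symmetric] c2_def[symmetric] algebra_simps)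
  hence "complex_of_real (\<Sum>x\<in>A. (cmod (h x))\<^sup>2) = complex_of_real ((\<Sum>x\<in>A. (cmod (f x))\<^sup>2)) - complex_of_real ((cmod c1)\<^sup>2) - complex_of_real ((cmod c2)\<^sup>2)"
    unfolding cinner_self complex_norm_square by simp
  hence "complex_of_real (\<Sum>x\<in>A. (cmod (h x))\<^sup>2) = complex_of_real ((\<Sum>x\<in>A. (cmod (f x))\<^sup>2) - (cmod c1)\<^sup>2 - (cmod c2)\<^sup>2)"
    by (simp only: of_real_diff)
  hence "(\<Sum>x\<in>A. (cmod (h x))\<^sup>2) = (\<Sum>x\<in>A. (cmod (f x))\<^sup>2) - (cmod c1)\<^sup>2 - (cmod c2)\<^sup>2"
    using of_real_eq_iff by blast
  moreover have "(\<Sum>x\<in>A. (cmod (h x))\<^sup>2) \<ge> 0" by (simp add: sum_nonneg)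
  ultimately show ?thesis unfolding c1_def c2_def by linarith
qed

lemma bessel_one_vector:
  assumes g1: "cinner A g1 g1 = 1"
  shows "(cmod (cinner A g1 f))\<^sup>2 \<le> (\<Sum>x\<in>A. (cmod (f x))\<^sup>2)"
proof -
  define c1 where "c1 = cinner A g1 f"
  define h where "h = (\<lambda>x. f x - c1 * g1 x)"
  have f1: "cinner A f g1 = cnj c1" unfolding c1_def by (simp add: cinner_cnj[of A f])
  have "cinner A h h = cinner A f f - c1 * cnj c1"
    unfolding h_def cinner_diff_l cinner_diff_r cinner_scal_l cinner_scal_r
    by (simp add: g1 f1 c1_def[symmetric] algebra_simps)
  hence "complex_of_real (\<Sum>x\<in>A. (cmod (h x))\<^sup>2) = complex_of_real ((\<Sum>x\<in>A. (cmod (f x))\<^sup>2)) - complex_of_real ((cmod c1)\<^sup>2)"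
    unfolding cinner_self complex_norm_square by simp
  hence "complex_of_real (\<Sum>x\<in>A. (cmod (h x))\<^sup>2) = complex_of_real ((\<Sum>x\<in>A. (cmod (f x))\<^sup>2) - (cmod c1)\<^sup>2)"
    by (simp only: of_real_diff)
  hence "(\<Sum>x\<in>A. (cmod (h x))\<^sup>2) = (\<Sum>x\<in>A. (cmod (f x))\<^sup>2) - (cmod c1)\<^sup>2"
    using of_real_eq_iff by blast
  moreover have "(\<Sum>x\<in>A. (cmod (h x))\<^sup>2) \<ge> 0" by (simp add: sum_nonneg)
  ultimately show ?thesis unfolding c1_def by linarith
qed

lemma sum_stabilizer_row_fixed: assumes fin: "finite S" and hfix: "\<And>E. E \<in> S \<Longrightarrow> mapply m E \<phi> = \<phi>"
  shows "(\<Sum>v\<in>bvecs m. (\<Sum>E\<in>S. E u v) * \<phi> v) = of_nat (card S) * \<phi> u"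
proof -
  have "(\<Sum>v\<in>bvecs m. (\<Sum>E\<in>S. E u v) * \<phi> v) = (\<Sum>E\<in>S. mapply m E \<phi> u)"
    unfolding mapply_def sum_distrib_right by (rule sum.swap)
  also have "\<dots> = (\<Sum>E\<in>S. \<phi> u)" using hfix by simp
  finally show ?thesis by simp
qed

lemma norm_cinner_stabilizer_row: assumes fin: "finite S" and hfix: "\<And>E. E \<in> S \<Longrightarrow> mapply m E \<phi> = \<phi>"
  shows "cmod (cinner (bvecs m) \<phi> (\<lambda>v. cnj (\<Sum>E\<in>S. E u v))) = real (card S) * cmod (\<phi> u)"
proof -
  have "cinner (bvecs m) \<phi> (\<lambda>v. cnj (\<Sum>E\<in>S. E u v)) = cnj (\<Sum>v\<in>bvecs m. (\<Sum>E\<in>S. E u v) * \<phi> v)"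
    unfolding cinner_def cnj_sum by (simp add: mult.commute)
  also have "\<dots> = cnj (of_nat (card S) * \<phi> u)" using sum_stabilizer_row_fixed[OF fin hfix] by simp
  finally show ?thesis by (simp add: norm_mult)
qed

lemma cinner_one_imp_norm: "cinner (bvecs m) \<phi> \<phi> = 1 \<Longrightarrow> (\<Sum>u\<in>bvecs m. (cmod (\<phi> u))\<^sup>2) = 1"
  unfolding cinner_self using of_real_eq_1_iff by blast

lemma card_stabilizer_le: assumes fin: "finite S" and SH: "S \<subseteq> HW m"
  and orth: "\<And>E F. E \<in> S \<Longrightarrow> F \<in> S \<Longrightarrow> E \<noteq> F \<Longrightarrow> hs_inner m E F = 0"
  and ne: "S \<noteq> {}"
  and fix1: "\<And>E. E \<in> S \<Longrightarrow> mapply m E \<phi>1 = \<phi>1" and n1: "cinner (bvecs m) \<phi>1 \<phi>1 = 1"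
  shows "card S \<le> 2 ^ m"
proof -
  let ?N = "real (card S)"
  have "\<forall>u\<in>bvecs m. (?N * cmod (\<phi>1 u))\<^sup>2 \<le> (\<Sum>v\<in>bvecs m. (cmod (\<Sum>E\<in>S. E u v))\<^sup>2)"
  proof
    fix u
    have "(cmod (cinner (bvecs m) \<phi>1 (\<lambda>v. cnj (\<Sum>E\<in>S. E u v))))\<^sup>2 \<le> (\<Sum>v\<in>bvecs m. (cmod (cnj (\<Sum>E\<in>S. E u v)))\<^sup>2)"
      by (rule bessel_one_vector[OF n1])
    thus "(?N * cmod (\<phi>1 u))\<^sup>2 \<le> (\<Sum>v\<in>bvecs m. (cmod (\<Sum>E\<in>S. E u v))\<^sup>2)"
      using norm_cinner_stabilizer_row[OF fin fix1] by (simp del: cnj_sum)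
  qed
  hence "(\<Sum>u\<in>bvecs m. (?N * cmod (\<phi>1 u))\<^sup>2) \<le> (\<Sum>u\<in>bvecs m. \<Sum>v\<in>bvecs m. (cmod (\<Sum>E\<in>S. E u v))\<^sup>2)"
    by (intro sum_mono) blast
  also have "\<dots> = ?N * 2 ^ m" by (rule sum_norm_sum_stabilizer[OF fin SH orth])
  finally have "?N * ?N * (\<Sum>u\<in>bvecs m. (cmod (\<phi>1 u))\<^sup>2) \<le> ?N * 2 ^ m"
    by (simp add: power_mult_distrib sum_distrib_left power2_eq_square algebra_simps)
  hence "?N * ?N \<le> ?N * 2 ^ m" using cinner_one_imp_norm[OF n1] by simp
  moreover have "?N > 0" using ne fin by (simp add: card_gt_0_iff)
  ultimately have "?N \<le> 2 ^ m" by simp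
  thus ?thesis by (metis of_nat_le_iff of_nat_numeral of_nat_power)
qed

lemma card_stabilizer_le_two_fixed: assumes fin: "finite S" and SH: "S \<subseteq> HW m"
  and orth: "\<And>E F. E \<in> S \<Longrightarrow> F \<in> S \<Longrightarrow> E \<noteq> F \<Longrightarrow> hs_inner m E F = 0"
  and ne: "S \<noteq> {}"
  and fix1: "\<And>E. E \<in> S \<Longrightarrow> mapply m E \<phi>1 = \<phi>1" and n1: "cinner (bvecs m) \<phi>1 \<phi>1 = 1"
  and fix2: "\<And>E. E \<in> S \<Longrightarrow> mapply m E \<phi>2 = \<phi>2" and n2: "cinner (bvecs m) \<phi>2 \<phi>2 = 1"
  and o12: "cinner (bvecs m) \<phi>1 \<phi>2 = 0"
  shows "2 * card S \<le> 2 ^ m"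
proof -
  let ?N = "real (card S)"
  have "\<forall>u\<in>bvecs m. (?N * cmod (\<phi>1 u))\<^sup>2 + (?N * cmod (\<phi>2 u))\<^sup>2 \<le> (\<Sum>v\<in>bvecs m. (cmod (\<Sum>E\<in>S. E u v))\<^sup>2)"
  proof
    fix u
    have "(cmod (cinner (bvecs m) \<phi>1 (\<lambda>v. cnj (\<Sum>E\<in>S. E u v))))\<^sup>2 + (cmod (cinner (bvecs m) \<phi>2 (\<lambda>v. cnj (\<Sum>E\<in>S. E u v))))\<^sup>2 \<le> (\<Sum>v\<in>bvecs m. (cmod (cnj (\<Sum>E\<in>S. E u v)))\<^sup>2)"
      by (rule bessel_two_vectors[OF n1 n2 o12])
    thus "(?N * cmod (\<phi>1 u))\<^sup>2 + (?N * cmod (\<phi>2 u))\<^sup>2 \<le> (\<Sum>v\<in>bvecs m. (cmod (\<Sum>E\<in>S. E u v))\<^sup>2)"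
      using norm_cinner_stabilizer_row[OF fin fix1] norm_cinner_stabilizer_row[OF fin fix2] by (simp del: cnj_sum)
  qed
  hence "(\<Sum>u\<in>bvecs m. (?N * cmod (\<phi>1 u))\<^sup>2 + (?N * cmod (\<phi>2 u))\<^sup>2) \<le> (\<Sum>u\<in>bvecs m. \<Sum>v\<in>bvecs m. (cmod (\<Sum>E\<in>S. E u v))\<^sup>2)"
    by (intro sum_mono) blast
  also have "\<dots> = ?N * 2 ^ m" by (rule sum_norm_sum_stabilizer[OF fin SH orth])
  finally have "?N * ?N * (\<Sum>u\<in>bvecs m. (cmod (\<phi>1 u))\<^sup>2) + ?N * ?N * (\<Sum>u\<in>bvecs m. (cmod (\<phi>2 u))\<^sup>2) \<le> ?N * 2 ^ m"
    by (simp add: power_mult_distrib sum_distrib_left power2_eq_square algebra_simps sum.distrib)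
  hence "?N * (2 * ?N) \<le> ?N * 2 ^ m" using cinner_one_imp_norm[OF n1] cinner_one_imp_norm[OF n2] by simp
  moreover have "?N > 0" using ne fin by (simp add: card_gt_0_iff)
  ultimately have "2 * ?N \<le> 2 ^ m" by simp
  thus ?thesis by (metis of_nat_le_iff of_nat_numeral of_nat_power of_nat_mult)
qed

lemma mapply_diff_scaled: "mapply m E (\<lambda>a. f a - c * g a) = (\<lambda>u. mapply m E f u - c * mapply m E g u)"
  unfolding mapply_def by (auto intro!: ext simp: algebra_simps sum_subtractf sum_distrib_left)

lemma mapply_scaled: "mapply m E (\<lambda>a. c * g a) = (\<lambda>u. c * mapply m E g u)"
  unfolding mapply_def by (auto intro!: ext simp: algebra_simps sum_distrib_left)

lemma cinner_cnorm2: "cinner (bvecs m) \<psi> \<psi> = complex_of_real (cnorm2 m \<psi>)"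
  unfolding cinner_self cnorm2_def ..

lemma stabilizer_group_props: assumes "stabilizer_group m S"
  shows "finite S" "S \<subseteq> HW m" "S \<noteq> {}"
    "\<And>E F. E \<in> S \<Longrightarrow> F \<in> S \<Longrightarrow> E \<noteq> F \<Longrightarrow> hs_inner m E F = 0"
proof -
  show SH: "S \<subseteq> HW m" using assms by (simp add: stabilizer_group_def)
  thus "finite S" using HW_finite finite_subset by blast
  show "S \<noteq> {}" using assms by (auto simp: stabilizer_group_def)
  show "\<And>E F. E \<in> S \<Longrightarrow> F \<in> S \<Longrightarrow> E \<noteq> F \<Longrightarrow> hs_inner m E F = 0" using stabilizer_hs_orthogonal[OF assms] by blast
qed

lemma fixed_vector_multiple: assumes S: "stabilizer_group m S" and cS: "card S = 2 ^ m"
  and psi: "\<psi> \<in> cvecs m" "\<And>E. E \<in> S \<Longrightarrow> mapply m E \<psi> = \<psi>" "cinner (bvecs m) \<psi> \<psi> = 1"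
  and phi: "\<phi> \<in> cvecs m" "\<And>E. E \<in> S \<Longrightarrow> mapply m E \<phi> = \<phi>"
  shows "\<phi> = (\<lambda>a. cinner (bvecs m) \<psi> \<phi> * \<psi> a)"
proof -
  note P = stabilizer_group_props[OF S]
  define c where "c = cinner (bvecs m) \<psi> \<phi>"
  define d where "d = (\<lambda>a. \<phi> a - c * \<psi> a)"
  have dfix: "\<And>E. E \<in> S \<Longrightarrow> mapply m E d = d" unfolding d_def mapply_diff_scaled using psi phi by simp
  have od: "cinner (bvecs m) \<psi> d = 0" unfolding d_def cinner_diff_r cinner_scal_r psi(3) c_def by simp
  define n where "n = (\<Sum>x\<in>bvecs m. (cmod (d x))\<^sup>2)"
  have n0: "n = 0"
  proof (rule ccontr)
    assume "n \<noteq> 0"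
    hence npos: "n > 0" unfolding n_def by (simp add: less_le sum_nonneg)
    define e where "e = (\<lambda>a. complex_of_real (1 / sqrt n) * d a)"
    have efix: "\<And>E. E \<in> S \<Longrightarrow> mapply m E e = e" unfolding e_def mapply_scaled using dfix by simp
    have "cinner (bvecs m) e e = complex_of_real (1 / sqrt n) * complex_of_real (1 / sqrt n) * complex_of_real n"
      unfolding e_def cinner_scal_l cinner_scal_r cinner_self n_def by simp
    also have "\<dots> = 1" using npos by (simp flip: of_real_mult)
    finally have ne: "cinner (bvecs m) e e = 1" .
    have oe: "cinner (bvecs m) \<psi> e = 0" unfolding e_def cinner_scal_r od by simp
    have "2 * card S \<le> 2 ^ m" by (rule card_stabilizer_le_two_fixed[OF P(1,2,4,3) psi(2,3) efix ne oe])
    thus False using cS by simp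
  qed
  have "\<forall>x\<in>bvecs m. (cmod (d x))\<^sup>2 = 0" using n0 unfolding n_def
    by (subst (asm) sum_nonneg_eq_0_iff) auto
  hence "\<forall>x\<in>bvecs m. d x = 0" by simp
  hence "\<forall>x. \<phi> x = c * \<psi> x" using psi(1) phi(1) unfolding d_def cvecs_def by auto
  thus ?thesis unfolding c_def by auto
qed

lemma fixed_space_eq_span: assumes S: "stabilizer_group m S" and cS: "card S = 2 ^ m"
  and psi: "\<psi> \<in> cvecs m" "\<And>E. E \<in> S \<Longrightarrow> mapply m E \<psi> = \<psi>" "cnorm2 m \<psi> = 1"
  shows "fixed_space m S = {(\<lambda>a. c * \<psi> a) | c. True}"
proof
  have n: "cinner (bvecs m) \<psi> \<psi> = 1" using psi(3) cinner_cnorm2 by simp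
  show "fixed_space m S \<subseteq> {(\<lambda>a. c * \<psi> a) | c. True}"
    using fixed_vector_multiple[OF S cS psi(1,2) n] unfolding fixed_space_def by blast
  show "{(\<lambda>a. c * \<psi> a) | c. True} \<subseteq> fixed_space m S"
    using psi(1,2) unfolding fixed_space_def cvecs_def by (auto simp: mapply_scaled)
qed

lemma scaled_fixed_imp_one: "\<psi> \<noteq> (\<lambda>_. 0) \<Longrightarrow> (\<lambda>u. c * \<psi> u) = \<psi> \<Longrightarrow> (c::complex) = 1"
  by (metis (no_types) fun_eq_iff mult_cancel_right1)

text \<open>Two Pauli matrices either commute or anticommute, and anticommuting ones cannot
  fix the same nonzero vector.\<close>

lemma fixed_paulis_commute:
  assumes psi: "\<psi> \<noteq> (\<lambda>_. 0)" and E: "E \<in> HW m" "mapply m E \<psi> = \<psi>" and F: "F \<in> HW m" "mapply m F \<psi> = \<psi>"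
  shows "mmul m E F = mmul m F E"
proof -
  obtain k a b where Ed: "E = pauli m k a b" "length a = m" "length b = m" using E HW_eq_pauli by auto
  obtain k' a' b' where Fd: "F = pauli m k' a' b'" "length a' = m" "length b' = m" using F HW_eq_pauli by auto
  define n where "n = bdot m b a' + bdot m b' a"
  have EF: "mmul m E F = (\<lambda>u v. (-1) ^ n * mmul m F E u v)"
    unfolding Ed(1) Fd(1) n_def by (rule mmul_pauli_swap) (use Ed Fd in auto)
  have "(\<lambda>u. (-1) ^ n * \<psi> u) = (\<lambda>u. (-1) ^ n * mapply m (mmul m F E) \<psi> u)"
    unfolding mapply_mmul E(2) F(2) ..
  also have "\<dots> = mapply m (mmul m E F) \<psi>" unfolding EF mapply_scaled_matrix ..
  also have "\<dots> = \<psi>" unfolding mapply_mmul E(2) F(2) ..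
  finally have "(-1::complex) ^ n = 1" by (rule scaled_fixed_imp_one[OF psi])
  thus ?thesis unfolding EF by simp
qed

lemma stabilizer_group_of_vector: assumes psi: "\<psi> \<in> cvecs m" "\<psi> \<noteq> (\<lambda>_. 0)"
  shows "stabilizer_group m {E \<in> HW m. mapply m E \<psi> = \<psi>}"
proof -
  let ?S = "{E \<in> HW m. mapply m E \<psi> = \<psi>}"
  have clos: "mmul m E F \<in> ?S" if E: "E \<in> ?S" and F: "F \<in> ?S" for E F
  proof -
    obtain k a b where Ed: "E = pauli m k a b" "length a = m" "length b = m" using E HW_eq_pauli by auto
    obtain k' a' b' where Fd: "F = pauli m k' a' b'" "length a' = m" "length b' = m" using F HW_eq_pauli by auto
    have "mmul m E F \<in> HW m" unfolding Ed(1) Fd(1) mmul_pauli[OF Ed(2,3) Fd(2,3)]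
      by (rule pauli_in_HW) (use Ed Fd in auto)
    thus ?thesis using E F by (simp add: mapply_mmul)
  qed
  have inv: "\<exists>F\<in>?S. mmul m E F = mid m \<and> mmul m F E = mid m" if E: "E \<in> ?S" for E
  proof -
    obtain k a b where Ed: "E = pauli m k a b" "length a = m" "length b = m" using E HW_eq_pauli by auto
    obtain k' where k': "k' < 4" "mmul m E (pauli m k' a b) = mid m" "mmul m (pauli m k' a b) E = mid m"
      using pauli_inverse[OF Ed(2,3)] unfolding Ed(1) by blast
    have "mapply m (pauli m k' a b) \<psi> = \<psi>"
      using mapply_mmul[of m "pauli m k' a b" E \<psi>] E k'(3) mapply_mid[OF psi(1)] by simp
    moreover have "pauli m k' a b \<in> HW m" using Ed k' by (intro pauli_in_HW) auto
    ultimately show ?thesis using k' by blast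
  qed
  have "(\<lambda>u v. - mid m u v) \<notin> ?S"
  proof
    assume "(\<lambda>u v. - mid m u v) \<in> ?S"
    hence "mapply m (\<lambda>u v. (-1) * mid m u v) \<psi> = \<psi>" by simp
    hence "(\<lambda>u. (-1) * \<psi> u) = \<psi>" unfolding mapply_scaled_matrix mapply_mid[OF psi(1)] .
    hence "(-1::complex) = 1" by (rule scaled_fixed_imp_one[OF psi(2)])
    thus False by simp
  qed
  moreover have "mid m \<in> ?S" using mid_HW mapply_mid[OF psi(1)] by simp
  moreover have "?S \<subseteq> HW m" by blast
  moreover have "\<forall>E\<in>?S. \<forall>F\<in>?S. mmul m E F = mmul m F E"
    by (auto intro: fixed_paulis_commute[OF psi(2)])
  moreover have "\<forall>E\<in>?S. \<forall>F\<in>?S. mmul m E F \<in> ?S" using clos by blast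
  moreover have "\<forall>E\<in>?S. \<exists>F\<in>?S. mmul m E F = mid m \<and> mmul m F E = mid m" using inv by blast
  ultimately show ?thesis unfolding stabilizer_group_def by blast
qed

section \<open>Binary quadratic forms\<close>

lemma double_sum_bxor_expansion:
  fixes X Y :: "nat \<Rightarrow> int" and s :: "nat \<Rightarrow> nat \<Rightarrow> int"
  assumes sym: "\<And>j k. j < r \<Longrightarrow> k < r \<Longrightarrow> s j k = s k j"
  shows "(\<Sum>j<r. \<Sum>k<r. (X j + Y j - 2 * X j * Y j) * s j k * (X k + Y k - 2 * X k * Y k)) =
    (\<Sum>j<r. \<Sum>k<r. X j * s j k * X k) + (\<Sum>j<r. \<Sum>k<r. Y j * s j k * Y k) + 2 * (\<Sum>j<r. \<Sum>k<r. X j * s j k * Y k)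
    + 4 * ((\<Sum>j<r. \<Sum>k<r. X j * Y j * s j k * X k * Y k) - (\<Sum>j<r. \<Sum>k<r. X j * Y j * s j k * (X k + Y k)))"
proof -
  have pt: "\<And>j k. (X j + Y j - 2 * X j * Y j) * s j k * (X k + Y k - 2 * X k * Y k) =
     X j * s j k * X k + Y j * s j k * Y k + X j * s j k * Y k + Y j * s j k * X k
     - 2 * (X j * Y j * s j k * (X k + Y k)) - 2 * ((X j + Y j) * s j k * (X k * Y k)) + 4 * (X j * Y j * s j k * X k * Y k)"
    by (simp add: algebra_simps)
  have sw1: "(\<Sum>j<r. \<Sum>k<r. Y j * s j k * X k) = (\<Sum>j<r. \<Sum>k<r. X j * s j k * Y k)"
  proof -
    have "(\<Sum>j<r. \<Sum>k<r. Y j * s j k * X k) = (\<Sum>k<r. \<Sum>j<r. Y j * s j k * X k)" by (rule sum.swap)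
    also have "\<dots> = (\<Sum>k<r. \<Sum>j<r. X k * s k j * Y j)" using sym by (intro sum.cong) (auto simp: mult.commute)
    finally show ?thesis .
  qed
  have sw2: "(\<Sum>j<r. \<Sum>k<r. (X j + Y j) * s j k * (X k * Y k)) = (\<Sum>j<r. \<Sum>k<r. X j * Y j * s j k * (X k + Y k))"
  proof -
    have "(\<Sum>j<r. \<Sum>k<r. (X j + Y j) * s j k * (X k * Y k)) = (\<Sum>k<r. \<Sum>j<r. (X j + Y j) * s j k * (X k * Y k))" by (rule sum.swap)
    also have "\<dots> = (\<Sum>k<r. \<Sum>j<r. X k * Y k * s k j * (X j + Y j))" using sym by (intro sum.cong) (auto simp: mult.commute)
    finally show ?thesis .
  qed
  have "(\<Sum>j<r. \<Sum>k<r. (X j + Y j - 2 * X j * Y j) * s j k * (X k + Y k - 2 * X k * Y k)) =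
    (\<Sum>j<r. \<Sum>k<r. X j * s j k * X k) + (\<Sum>j<r. \<Sum>k<r. Y j * s j k * Y k) + (\<Sum>j<r. \<Sum>k<r. X j * s j k * Y k)
    + (\<Sum>j<r. \<Sum>k<r. Y j * s j k * X k) - 2 * (\<Sum>j<r. \<Sum>k<r. X j * Y j * s j k * (X k + Y k))
    - 2 * (\<Sum>j<r. \<Sum>k<r. (X j + Y j) * s j k * (X k * Y k)) + 4 * (\<Sum>j<r. \<Sum>k<r. X j * Y j * s j k * X k * Y k)"
    unfolding pt by (simp only: sum.distrib sum_subtractf sum_distrib_left[symmetric])
  thus ?thesis unfolding sw1 sw2 by simp
qed

definition qform :: "nat \<Rightarrow> (nat \<Rightarrow> nat \<Rightarrow> bool) \<Rightarrow> bool list \<Rightarrow> nat" where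
  "qform r S x = (\<Sum>j<r. \<Sum>k<r. of_bool (x ! j) * of_bool (S j k) * of_bool (x ! k))"

definition bform :: "nat \<Rightarrow> (nat \<Rightarrow> nat \<Rightarrow> bool) \<Rightarrow> bool list \<Rightarrow> bool list \<Rightarrow> nat" where
  "bform r S x y = (\<Sum>j<r. \<Sum>k<r. of_bool (x ! j) * of_bool (S j k) * of_bool (y ! k))"

lemma int_qform: "int (qform r S x) = (\<Sum>j<r. \<Sum>k<r. of_bool (x ! j) * of_bool (S j k) * of_bool (x ! k))"
  unfolding qform_def by (simp add: of_nat_sum)

lemma int_bform: "int (bform r S x y) = (\<Sum>j<r. \<Sum>k<r. of_bool (x ! j) * of_bool (S j k) * of_bool (y ! k))"
  unfolding bform_def by (simp add: of_nat_sum)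

lemma qform_bxor: assumes sym: "sym_bin r S" and l: "r \<le> length x" "r \<le> length y"
  shows "\<exists>D. int (qform r S (bxor x y)) = int (qform r S x) + int (qform r S y) + 2 * int (bform r S x y) + 4 * D"
proof -
  define X where "X = (\<lambda>j. of_bool (x ! j) :: int)"
  define Y where "Y = (\<lambda>j. of_bool (y ! j) :: int)"
  define s where "s = (\<lambda>j k. of_bool (S j k) :: int)"
  have "int (qform r S (bxor x y)) = (\<Sum>j<r. \<Sum>k<r. (X j + Y j - 2 * X j * Y j) * s j k * (X k + Y k - 2 * X k * Y k))"
    unfolding int_qform X_def Y_def s_def using l by (intro sum.cong refl) (auto simp: of_bool_def)
  also have "\<dots> = int (qform r S x) + int (qform r S y) + 2 * int (bform r S x y) + 4 * ((\<Sum>j<r. \<Sum>k<r. X j * Y j * s j k * X k * Y k) - (\<Sum>j<r. \<Sum>k<r. X j * Y j * s j k * (X k + Y k)))"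
    unfolding int_qform int_bform X_def Y_def s_def
    by (rule double_sum_bxor_expansion) (use sym in \<open>auto simp: sym_bin_def\<close>)
  finally show ?thesis by blast
qed

lemma i_power_qform_bxor: assumes sym: "sym_bin r S" and l: "r \<le> length x" "r \<le> length y"
  shows "\<i> ^ qform r S (bxor x y) = \<i> ^ qform r S x * \<i> ^ qform r S y * (-1) ^ bform r S x y"
proof -
  obtain D where D: "int (qform r S (bxor x y)) = int (qform r S x) + int (qform r S y) + 2 * int (bform r S x y) + 4 * D"
    using qform_bxor[OF assms] by blast
  have "\<i> ^ qform r S (bxor x y) = ipow (int (qform r S (bxor x y)))" unfolding ipow_of_nat ..
  also have "\<dots> = ipow (int (qform r S x)) * ipow (int (qform r S y)) * ipow (2 * int (bform r S x y)) * ipow (4 * D)"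
    unfolding D ipow_add ..
  also have "\<dots> = \<i> ^ qform r S x * \<i> ^ qform r S y * (-1) ^ bform r S x y"
    unfolding ipow_of_nat ipow_2 ipow_4 by simp
  finally show ?thesis .
qed

lemma bform_bsign: "(-1::complex) ^ bform r S x y = (\<Prod>j<r. bsign (x ! j \<and> odd (\<Sum>k<r. of_bool (S j k \<and> y ! k) :: nat)))"
proof -
  have "(-1::complex) ^ bform r S x y = (\<Prod>j<r. (-1) ^ (\<Sum>k<r. of_bool (x ! j) * of_bool (S j k) * of_bool (y ! k)))"
    unfolding bform_def power_sum ..
  also have "\<dots> = (\<Prod>j<r. bsign (x ! j \<and> odd (\<Sum>k<r. of_bool (S j k \<and> y ! k) :: nat)))"
  proof (rule prod.cong[OF refl])
    fix j
    show "(-1::complex) ^ (\<Sum>k<r. of_bool (x ! j) * of_bool (S j k) * of_bool (y ! k)) = bsign (x ! j \<and> odd (\<Sum>k<r. of_bool (S j k \<and> y ! k) :: nat))"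
    proof (cases "x ! j")
      case True
      have "(\<Sum>k<r. of_bool (x ! j) * of_bool (S j k) * of_bool (y ! k)) = (\<Sum>k<r. of_bool (S j k \<and> y ! k) :: nat)"
        using True by (intro sum.cong refl) simp
      thus ?thesis using True bsign_odd by simp
    next
      case False thus ?thesis by simp
    qed
  qed
  finally show ?thesis .
qed

lemma qform_evec: "n < r \<Longrightarrow> qform r S (evec r n) = of_bool (S n n)"
proof -
  assume n: "n < r"
  have "qform r S (evec r n) = (\<Sum>j<r. if j = n then (\<Sum>k<r. if k = n then of_bool (S n n) else 0) else 0)"
    unfolding qform_def by (intro sum.cong refl) auto
  thus ?thesis using n by (simp add: sum.delta)
qed

lemma bform_evec_sign: assumes n: "n < r"
  shows "(-1::complex) ^ bform r S y (evec r n) = (\<Prod>j<r. bsign (y ! j \<and> S j n))"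
proof -
  have "(\<Sum>k<r. of_bool (S j k \<and> evec r n ! k) :: nat) = of_bool (S j n)" for j
  proof -
    have "(\<Sum>k<r. of_bool (S j k \<and> evec r n ! k) :: nat) = (\<Sum>k<r. if k = n then of_bool (S j n) else 0)"
      by (intro sum.cong refl) auto
    also have "\<dots> = of_bool (S j n)" using n by (simp add: sum.delta)
    finally show ?thesis .
  qed
  thus ?thesis unfolding bform_bsign by simp
qed

lemma prod_of_bool_int: "finite A \<Longrightarrow> (\<Prod>i\<in>A. (of_bool (P i) :: int)) = of_bool (\<forall>i\<in>A. P i)"
  by (induction A rule: finite_induct) auto

lemma card_filter_sum: "finite A \<Longrightarrow> card {x\<in>A. P x} = (\<Sum>x\<in>A. (of_bool (P x) :: nat))"
proof -
  assume fin: "finite A"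
  have "card {x\<in>A. P x} = (\<Sum>x\<in>{x\<in>A. P x}. 1)" by (rule card_eq_sum)
  also have "\<dots> = (\<Sum>x\<in>A. if P x then 1 else 0)" by (rule sum.inter_filter[OF fin])
  finally show ?thesis by (simp add: of_bool_def)
qed

lemma card_filter_sum_real: "finite A \<Longrightarrow> real (card {x\<in>A. P x}) = (\<Sum>x\<in>A. (of_bool (P x) :: real))"
  by (simp add: card_filter_sum of_nat_sum)

section \<open>Column echelon bases of subspaces\<close>

definition lincomb :: "nat \<Rightarrow> nat \<Rightarrow> (nat \<Rightarrow> nat \<Rightarrow> bool) \<Rightarrow> bool list \<Rightarrow> bool list" where
  "lincomb m r H y = map (\<lambda>i. odd (card {j. j < r \<and> H i j \<and> y ! j})) [0..<m]"

definition column :: "nat \<Rightarrow> (nat \<Rightarrow> nat \<Rightarrow> bool) \<Rightarrow> nat \<Rightarrow> bool list" where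
  "column m H j = map (\<lambda>i. H i j) [0..<m]"

definition is_subspace :: "nat \<Rightarrow> bool list set \<Rightarrow> bool" where
  "is_subspace m X \<longleftrightarrow> X \<subseteq> bvecs m \<and> zvec m \<in> X \<and> (\<forall>a\<in>X. \<forall>b\<in>X. bxor a b \<in> X)"

lemma lincomb_len[simp]: "length (lincomb m r H y) = m" by (simp add: lincomb_def)
lemma column_len[simp]: "length (column m H j) = m" by (simp add: column_def)
lemma column_nth[simp]: "i < m \<Longrightarrow> column m H j ! i = H i j" by (simp add: column_def)

lemma bsign_bxor: "i < length x \<Longrightarrow> i < length y \<Longrightarrow> bsign (bxor x y ! i) = bsign (x ! i) * bsign (y ! i)"
  by (simp add: bsign_def)

lemma lincomb_bsign: "i < m \<Longrightarrow> bsign (lincomb m r H y ! i) = (\<Prod>j<r. bsign (H i j \<and> y ! j))"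
  by (simp add: lincomb_def bsign_odd card_lt_bsign)

lemma lincomb_Suc: "lincomb m (Suc r) H y = bxor (lincomb m r H y) (if y ! r then column m H r else zvec m)"
proof (rule nth_equalityI)
  show "length (lincomb m (Suc r) H y) = length (bxor (lincomb m r H y) (if y ! r then column m H r else zvec m))" by simp
  fix i assume "i < length (lincomb m (Suc r) H y)"
  hence i: "i < m" by simp
  have "bsign (lincomb m (Suc r) H y ! i) = (\<Prod>j<r. bsign (H i j \<and> y ! j)) * bsign (H i r \<and> y ! r)"
    unfolding lincomb_bsign[OF i] by simp
  also have "\<dots> = bsign (lincomb m r H y ! i) * bsign ((if y ! r then column m H r else zvec m) ! i)"
    unfolding lincomb_bsign[OF i] using i by (cases "y ! r") (simp_all add: column_def)
  also have "\<dots> = bsign (bxor (lincomb m r H y) (if y ! r then column m H r else zvec m) ! i)"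
    by (rule bsign_bxor[symmetric]) (use i in auto)
  finally have "bsign (lincomb m (Suc r) H y ! i) = bsign (bxor (lincomb m r H y) (if y ! r then column m H r else zvec m) ! i)" .
  thus "lincomb m (Suc r) H y ! i = bxor (lincomb m r H y) (if y ! r then column m H r else zvec m) ! i" by (simp add: bsign_eq_iff)
qed

lemma lincomb_in: assumes X: "is_subspace m X" and cols: "\<forall>j<r. column m H j \<in> X" shows "lincomb m r H y \<in> X"
  using cols
proof (induction r)
  case 0
  have "lincomb m 0 H y = zvec m" by (simp add: lincomb_def zvec_def list_eq_iff_nth_eq)
  thus ?case using X by (simp add: is_subspace_def)
next
  case (Suc r)
  hence a: "lincomb m r H y \<in> X" by simp
  have b: "(if y ! r then column m H r else zvec m) \<in> X" using Suc.prems X by (simp add: is_subspace_def)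
  show ?case unfolding lincomb_Suc using a b X by (simp add: is_subspace_def)
qed

definition shift_rows :: "(nat \<Rightarrow> nat \<Rightarrow> bool) \<Rightarrow> nat \<Rightarrow> nat \<Rightarrow> bool" where
  "shift_rows H = (\<lambda>i j. 0 < i \<and> H (i - 1) j)"

definition cons_column :: "bool list \<Rightarrow> (nat \<Rightarrow> nat \<Rightarrow> bool) \<Rightarrow> nat \<Rightarrow> nat \<Rightarrow> bool" where
  "cons_column h H = (\<lambda>i j. if j = 0 then h ! i else (0 < i \<and> H (i - 1) (j - 1)))"

lemma lincomb_shift_rows: "lincomb (Suc m) r (shift_rows H) y = False # lincomb m r H y"
proof (rule nth_equalityI)
  show "length (lincomb (Suc m) r (shift_rows H) y) = length (False # lincomb m r H y)" by simp
  fix i assume "i < length (lincomb (Suc m) r (shift_rows H) y)"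
  hence i: "i < Suc m" by simp
  show "lincomb (Suc m) r (shift_rows H) y ! i = (False # lincomb m r H y) ! i"
  proof (cases i)
    case 0 thus ?thesis by (simp add: lincomb_def shift_rows_def del: upt_Suc)
  next
    case (Suc i') thus ?thesis using i by (simp add: lincomb_def shift_rows_def nth_Cons del: upt_Suc)
  qed
qed

lemma column_shift_rows: "column (Suc m) (shift_rows H) j = False # column m H j"
  by (auto simp: column_def shift_rows_def list_eq_iff_nth_eq nth_Cons split: nat.splits simp del: upt_Suc)

lemma column_cons_column_0: "length h = Suc m \<Longrightarrow> column (Suc m) (cons_column h H) 0 = h"
  by (auto simp: column_def cons_column_def list_eq_iff_nth_eq simp del: upt_Suc)

lemma column_cons_column_Suc: "column (Suc m) (cons_column h H) (Suc j) = False # column m H j"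
  by (auto simp: column_def cons_column_def list_eq_iff_nth_eq nth_Cons split: nat.splits simp del: upt_Suc)

lemma lincomb_cons_column: assumes h: "length h = Suc m"
  shows "lincomb (Suc m) (Suc r) (cons_column h H) (p # y) = bxor (if p then h else zvec (Suc m)) (False # lincomb m r H y)"
proof (rule nth_equalityI)
  show "length (lincomb (Suc m) (Suc r) (cons_column h H) (p # y)) = length (bxor (if p then h else zvec (Suc m)) (False # lincomb m r H y))"
    using h by simp
  fix i assume "i < length (lincomb (Suc m) (Suc r) (cons_column h H) (p # y))"
  hence i: "i < Suc m" by simp
  have "bsign (lincomb (Suc m) (Suc r) (cons_column h H) (p # y) ! i) = bsign (cons_column h H i 0 \<and> p) * (\<Prod>j<r. bsign (cons_column h H i (Suc j) \<and> y ! j))"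
    unfolding lincomb_bsign[OF i] prod.lessThan_Suc_shift by simp
  also have "\<dots> = bsign (bxor (if p then h else zvec (Suc m)) (False # lincomb m r H y) ! i)"
  proof (cases i)
    case 0 thus ?thesis using h by (simp add: cons_column_def)
  next
    case (Suc i')
    hence i': "i' < m" using i by simp
    have "(\<Prod>j<r. bsign (cons_column h H i (Suc j) \<and> y ! j)) = bsign (lincomb m r H y ! i')"
      unfolding lincomb_bsign[OF i'] using Suc by (simp add: cons_column_def)
    have "bsign (bxor (if p then h else zvec (Suc m)) (False # lincomb m r H y) ! i) = bsign ((if p then h else zvec (Suc m)) ! i) * bsign ((False # lincomb m r H y) ! i)"
      using h i by (intro bsign_bxor) auto
    also have "\<dots> = bsign (cons_column h H i 0 \<and> p) * bsign (lincomb m r H y ! i')"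
      using Suc h i by (cases p) (simp_all add: cons_column_def)
    finally show ?thesis using \<open>(\<Prod>j<r. bsign (cons_column h H i (Suc j) \<and> y ! j)) = bsign (lincomb m r H y ! i')\<close> by simp
  qed
  finally show "lincomb (Suc m) (Suc r) (cons_column h H) (p # y) ! i = bxor (if p then h else zvec (Suc m)) (False # lincomb m r H y) ! i"
    by (simp add: bsign_eq_iff)
qed

lemma cref_shift_rows: assumes "is_cref m r H piv" shows "is_cref (Suc m) r (shift_rows H) (map Suc piv)"
  using assms unfolding is_cref_def shift_rows_def
  by (auto simp: sorted_wrt_map less_Suc_eq_0_disj)

lemma cons_column_above_pivot: assumes c: "is_cref m r H piv" and j: "j < Suc r"
  and i: "i < (0 # map Suc piv) ! j"
  shows "\<not> cons_column h H i j"
proof (cases j)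
  case 0 thus ?thesis using i by simp
next
  case (Suc j')
  have l: "length piv = r" using c by (simp add: is_cref_def)
  have j': "j' < r" using j Suc by simp
  hence "i < Suc (piv ! j')" using i Suc l by simp
  thus ?thesis using c Suc l j' by (cases i) (auto simp: is_cref_def cons_column_def)
qed

lemma cons_column_pivot_rows: assumes c: "is_cref m r H piv" and h: "h ! 0"
  and hz: "\<forall>j<r. \<not> h ! Suc (piv ! j)" and j: "j < Suc r" and k: "k < Suc r"
  shows "cons_column h H ((0 # map Suc piv) ! j) k = (j = k)"
proof (cases j)
  case 0 thus ?thesis using h by (cases k) (auto simp: cons_column_def)
next
  case (Suc j')
  have l: "length piv = r" using c by (simp add: is_cref_def)
  have j': "j' < r" using j Suc by simp
  show ?thesis
  proof (cases k)
    case 0 thus ?thesis using Suc hz j' l by (simp add: cons_column_def)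
  next
    case (Suc k')
    hence "k' < r" using k by simp
    thus ?thesis using c j' l Suc \<open>j = Suc j'\<close> by (simp add: cons_column_def is_cref_def)
  qed
qed

lemma cref_cons_column: assumes c: "is_cref m r H piv" and h: "length h = Suc m" "h ! 0"
  and hz: "\<forall>j<r. \<not> h ! Suc (piv ! j)"
  shows "is_cref (Suc m) (Suc r) (cons_column h H) (0 # map Suc piv)"
proof -
  have l: "length piv = r" using c by (simp add: is_cref_def)
  have "sorted_wrt (<) (0 # map Suc piv)" using c by (simp add: is_cref_def sorted_wrt_map)
  moreover have "\<forall>j<Suc r. (0 # map Suc piv) ! j < Suc m"
    using c l by (auto simp: is_cref_def less_Suc_eq_0_disj)
  ultimately show ?thesis unfolding is_cref_def
    using l cons_column_pivot_rows[OF c h(2) hz] cons_column_above_pivot[OF c] by auto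
qed

lemma lincomb_piv: assumes c: "is_cref m r H piv" and j: "j < r"
  shows "lincomb m r H z ! (piv ! j) = z ! j"
proof -
  have pj: "piv ! j < m" using c j by (simp add: is_cref_def)
  have "{l. l < r \<and> H (piv ! j) l \<and> z ! l} = (if z ! j then {j} else {})"
    using c j by (auto simp: is_cref_def)
  thus ?thesis using pj by (simp add: lincomb_def)
qed

lemma bxor_Cons[simp]: "bxor (x # a) (y # b) = (x \<noteq> y) # bxor a b" by (simp add: bxor_def)

lemma is_subspace_tail: assumes "is_subspace (Suc m) X" shows "is_subspace m {v. False # v \<in> X}"
proof -
  have "zvec (Suc m) = False # zvec m" by (simp add: zvec_def)
  moreover have "False # bxor a b \<in> X" if "False # a \<in> X" "False # b \<in> X" for a b
  proof -
    have "bxor (False # a) (False # b) \<in> X" using assms that unfolding is_subspace_def by blast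
    thus ?thesis by simp
  qed
  moreover have "{v. False # v \<in> X} \<subseteq> bvecs m" using assms unfolding is_subspace_def by auto
  ultimately show ?thesis using assms unfolding is_subspace_def by auto
qed

definition echelon_basis :: "nat \<Rightarrow> bool list set \<Rightarrow> nat \<Rightarrow> (nat \<Rightarrow> nat \<Rightarrow> bool) \<Rightarrow> nat list \<Rightarrow> bool" where
  "echelon_basis m X r H piv \<longleftrightarrow> is_cref m r H piv \<and> (\<forall>j<r. column m H j \<in> X) \<and>
     (\<forall>a\<in>X. \<exists>y. length y = r \<and> a = lincomb m r H y)"

lemma is_subspace_Cons: assumes "is_subspace (Suc m) X" and "a \<in> X" shows "a = a ! 0 # tl a"
  using assms unfolding is_subspace_def by (cases a) auto

lemma echelon_basis_no_pivot:
  assumes X: "is_subspace (Suc m) X" and no: "\<forall>h\<in>X. \<not> h ! 0"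
    and e: "echelon_basis m {v. False # v \<in> X} r H piv"
  shows "echelon_basis (Suc m) X r (shift_rows H) (map Suc piv)"
proof -
  have "\<exists>y. length y = r \<and> a = lincomb (Suc m) r (shift_rows H) y" if a: "a \<in> X" for a
  proof -
    have "a = False # tl a" using is_subspace_Cons[OF X a] no a by simp
    hence "tl a \<in> {v. False # v \<in> X}" using a by simp
    then obtain y where "length y = r" "tl a = lincomb m r H y" using e unfolding echelon_basis_def by blast
    thus ?thesis using \<open>a = False # tl a\<close> unfolding lincomb_shift_rows by auto
  qed
  thus ?thesis using e cref_shift_rows unfolding echelon_basis_def column_shift_rows by auto
qed

text \<open>Gaussian elimination step: a vector \<open>h\<close> with leading entry 1 is cleared at the
  pivot rows of the basis of the tail subspace and becomes the new first column.\<close>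

lemma echelon_basis_new_pivot:
  assumes X: "is_subspace (Suc m) X" and h: "h \<in> X" "h ! 0"
    and e: "echelon_basis m {v. False # v \<in> X} r H piv"
  shows "\<exists>H' piv'. echelon_basis (Suc m) X (Suc r) H' piv'"
proof -
  define z where "z = map (\<lambda>j. h ! Suc (piv ! j)) [0..<r]"
  define h' where "h' = bxor h (False # lincomb m r H z)"
  have c: "is_cref m r H piv" and cols: "\<forall>j<r. column m H j \<in> {v. False # v \<in> X}"
    and rep: "\<forall>a\<in>{v. False # v \<in> X}. \<exists>y. length y = r \<and> a = lincomb m r H y"
    using e unfolding echelon_basis_def by blast+
  have clos: "bxor a b \<in> X" if "a \<in> X" "b \<in> X" for a b using X that unfolding is_subspace_def by blast
  have hl: "length h = Suc m" using X h unfolding is_subspace_def by auto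
  have "lincomb m r H z \<in> {v. False # v \<in> X}"
    by (rule lincomb_in[OF is_subspace_tail[OF X] cols])
  hence hsX: "h' \<in> X" using clos h(1) unfolding h'_def by simp
  have hsl: "length h' = Suc m" using hl unfolding h'_def by simp
  have hs0: "h' ! 0" using h hl unfolding h'_def by simp
  have hsz: "\<forall>j<r. \<not> h' ! Suc (piv ! j)"
  proof (intro allI impI)
    fix j assume j: "j < r"
    have "piv ! j < m" using c j by (simp add: is_cref_def)
    thus "\<not> h' ! Suc (piv ! j)" using hl lincomb_piv[OF c j, of z] j unfolding h'_def z_def by simp
  qed
  have "\<exists>y. length y = Suc r \<and> a = lincomb (Suc m) (Suc r) (cons_column h' H) y" if a: "a \<in> X" for a
  proof -
    define d where "d = (if a ! 0 then bxor a h' else a)"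
    have "d \<in> X" unfolding d_def using a hsX clos by simp
    moreover have "\<not> d ! 0" "length d = Suc m"
      using X a hs0 hsl unfolding d_def is_subspace_def by auto
    ultimately have "tl d \<in> {v. False # v \<in> X}" using is_subspace_Cons[OF X] by fastforce
    then obtain y where y: "length y = r" "tl d = lincomb m r H y" using rep by blast
    have "d = False # lincomb m r H y" using is_subspace_Cons[OF X \<open>d \<in> X\<close>] \<open>\<not> d ! 0\<close> y(2) by simp
    moreover have "a = bxor (if a ! 0 then h' else zvec (Suc m)) d"
      using X a hsl by (auto simp: d_def is_subspace_def bxor_cancel bxor_comm[of h'])
    ultimately have "a = lincomb (Suc m) (Suc r) (cons_column h' H) (a ! 0 # y)"
      unfolding lincomb_cons_column[OF hsl] by simp
    thus ?thesis using y by (intro exI[of _ "a ! 0 # y"]) simp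
  qed
  moreover have "\<forall>j<Suc r. column (Suc m) (cons_column h' H) j \<in> X"
    using cols hsX by (auto simp: less_Suc_eq_0_disj column_cons_column_0[OF hsl] column_cons_column_Suc)
  ultimately show ?thesis using cref_cons_column[OF c hsl hs0 hsz] unfolding echelon_basis_def by blast
qed

lemma subspace_echelon_basis: "is_subspace m X \<Longrightarrow> \<exists>r H piv. echelon_basis m X r H piv"
proof (induction m arbitrary: X)
  case 0
  hence "X \<subseteq> {[]}" by (auto simp: is_subspace_def)
  hence "echelon_basis 0 X 0 (\<lambda>_ _. False) []" by (auto simp: echelon_basis_def is_cref_def lincomb_def)
  thus ?case by blast
next
  case (Suc m)
  obtain r H piv where e: "echelon_basis m {v. False # v \<in> X} r H piv"
    using Suc.IH[OF is_subspace_tail[OF Suc.prems]] by blast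
  show ?case
  proof (cases "\<exists>h\<in>X. h ! 0")
    case True
    then obtain h where "h \<in> X" "h ! 0" by blast
    thus ?thesis using echelon_basis_new_pivot[OF Suc.prems _ _ e] by blast
  next
    case False
    thus ?thesis using echelon_basis_no_pivot[OF Suc.prems _ e] by blast
  qed
qed

section \<open>The change of basis \<open>P\<^sub>I\<close>\<close>

locale cref_data =
  fixes m :: nat and r :: nat and H :: "nat \<Rightarrow> nat \<Rightarrow> bool" and piv :: "nat list"
  assumes cref: "is_cref m r H piv"
begin

lemma piv_props: "length piv = r" "distinct piv" "set piv \<subseteq> {..<m}" "r \<le> m"
  "\<And>j. j < r \<Longrightarrow> piv ! j < m"
proof -
  show l: "length piv = r" using cref by (simp add: is_cref_def)
  show d: "distinct piv" using cref by (simp add: is_cref_def strict_sorted_iff)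
  show s: "set piv \<subseteq> {..<m}" using cref l by (auto simp: is_cref_def in_set_conv_nth)
  show "\<And>j. j < r \<Longrightarrow> piv ! j < m" using cref by (simp add: is_cref_def)
  have "card (set piv) \<le> card {..<m}" using s by (intro card_mono) auto
  thus "r \<le> m" using distinct_card[OF d] l by simp
qed

lemma r_le_m: "r \<le> m" using piv_props(4) .

lemma nonpiv_props: "length (nonpiv m piv) = m - r" "distinct (nonpiv m piv)"
  "set (nonpiv m piv) = {i. i < m \<and> i \<notin> set piv}"
proof -
  show s: "set (nonpiv m piv) = {i. i < m \<and> i \<notin> set piv}" by (auto simp: nonpiv_def)
  show d: "distinct (nonpiv m piv)" by (simp add: nonpiv_def)
  have "{i. i < m \<and> i \<notin> set piv} = {..<m} - set piv" by auto
  hence "card {i. i < m \<and> i \<notin> set piv} = m - r"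
    using piv_props distinct_card[of piv] by (simp add: card_Diff_subset)
  thus "length (nonpiv m piv) = m - r" using distinct_card[OF d] s by simp
qed

lemma H_piv: "j < r \<Longrightarrow> k < r \<Longrightarrow> H (piv ! j) k = (j = k)"
  using cref by (simp add: is_cref_def)

lemma piv_or_nonpiv: "i < m \<Longrightarrow> (\<exists>j<r. piv ! j = i) \<or> (\<exists>k<m-r. nonpiv m piv ! k = i)"
proof -
  assume i: "i < m"
  show ?thesis
  proof (cases "i \<in> set piv")
    case True thus ?thesis using piv_props by (auto simp: in_set_conv_nth)
  next
    case False
    hence "i \<in> set (nonpiv m piv)" using nonpiv_props i by auto
    then obtain k where "k < length (nonpiv m piv)" "nonpiv m piv ! k = i" by (meson in_set_conv_nth)
    thus ?thesis using nonpiv_props(1) by auto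
  qed
qed

lemma nonpiv_lt: "k < m - r \<Longrightarrow> nonpiv m piv ! k < m"
proof -
  assume k: "k < m - r"
  have "nonpiv m piv ! k \<in> set (nonpiv m piv)" by (rule nth_mem) (use nonpiv_props(1) k in simp)
  thus ?thesis using nonpiv_props(3) by blast
qed

lemma nonpiv_not_piv: "k < m - r \<Longrightarrow> j < r \<Longrightarrow> nonpiv m piv ! k \<noteq> piv ! j"
proof -
  assume k: "k < m - r" and j: "j < r"
  have "nonpiv m piv ! k \<in> set (nonpiv m piv)" by (rule nth_mem) (use nonpiv_props(1) k in simp)
  hence "nonpiv m piv ! k \<notin> set piv" using nonpiv_props(3) by simp
  moreover have "piv ! j \<in> set piv" by (rule nth_mem) (use j piv_props(1) in simp)
  ultimately show ?thesis by auto
qed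

lemma nonpiv_inj: "k < m - r \<Longrightarrow> k' < m - r \<Longrightarrow> nonpiv m piv ! k = nonpiv m piv ! k' \<longleftrightarrow> k = k'"
  using nonpiv_props by (simp add: nth_eq_iff_index_eq)

lemma Pmul_len[simp]: "length (Pmul m r H piv u) = m" by (simp add: Pmul_def)

lemma Pmul_nth: "i < m \<Longrightarrow> Pmul m r H piv u ! i = odd (card {j. j < r \<and> H i j \<and> u ! j}
     + card {k. k < m - r \<and> nonpiv m piv ! k = i \<and> u ! (r + k)})"
  by (simp add: Pmul_def)

lemma card_single: "k0 < n \<Longrightarrow> (\<And>k. k < n \<Longrightarrow> Q k \<longleftrightarrow> k = k0) \<Longrightarrow>
   card {k. k < n \<and> Q k \<and> P k} = of_bool (P k0)"
proof -
  assume "k0 < n" "\<And>k. k < n \<Longrightarrow> Q k \<longleftrightarrow> k = k0"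
  hence "{k. k < n \<and> Q k \<and> P k} = (if P k0 then {k0} else {})" by auto
  thus ?thesis by simp
qed

lemma Pmul_piv: "j0 < r \<Longrightarrow> Pmul m r H piv u ! (piv ! j0) = u ! j0"
proof -
  assume j0: "j0 < r"
  have c1: "card {j. j < r \<and> H (piv ! j0) j \<and> u ! j} = of_bool (u ! j0)"
    by (rule card_single[OF j0]) (use j0 H_piv in auto)
  have e2: "{k. k < m - r \<and> nonpiv m piv ! k = piv ! j0 \<and> u ! (r + k)} = {}"
    using nonpiv_not_piv[OF _ j0] by blast
  have c2: "card {k. k < m - r \<and> nonpiv m piv ! k = piv ! j0 \<and> u ! (r + k)} = 0"
    unfolding e2 by simp
  have "Pmul m r H piv u ! (piv ! j0) = odd (card {j. j < r \<and> H (piv ! j0) j \<and> u ! j}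
     + card {k. k < m - r \<and> nonpiv m piv ! k = piv ! j0 \<and> u ! (r + k)})"
    by (rule Pmul_nth) (use piv_props j0 in simp)
  also have "\<dots> = odd (of_bool (u ! j0) + (0::nat))" by (simp only: c1 c2)
  finally show ?thesis by simp
qed

lemma Pmul_nonpiv: "k0 < m - r \<Longrightarrow> Pmul m r H piv u ! (nonpiv m piv ! k0) =
   (odd (card {j. j < r \<and> H (nonpiv m piv ! k0) j \<and> u ! j}) \<noteq> u ! (r + k0))"
proof -
  assume k0: "k0 < m - r"
  have c2: "card {k. k < m - r \<and> nonpiv m piv ! k = nonpiv m piv ! k0 \<and> u ! (r + k)} = of_bool (u ! (r + k0))"
    by (rule card_single[OF k0]) (use nonpiv_inj k0 in auto)
  have "Pmul m r H piv u ! (nonpiv m piv ! k0) = odd (card {j. j < r \<and> H (nonpiv m piv ! k0) j \<and> u ! j}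
     + card {k. k < m - r \<and> nonpiv m piv ! k = nonpiv m piv ! k0 \<and> u ! (r + k)})"
    by (rule Pmul_nth) (use nonpiv_lt k0 in simp)
  also have "\<dots> = odd (card {j. j < r \<and> H (nonpiv m piv ! k0) j \<and> u ! j} + of_bool (u ! (r + k0)))"
    by (simp only: c2)
  finally show ?thesis by (cases "u ! (r + k0)") auto
qed

text \<open>The pivot rows of \<open>P\<^sub>I\<close> are unit rows, so the first \<open>r\<close> coordinates of \<open>u\<close> are read off
  at the pivots, and the others from the non-pivot rows.\<close>

definition Pinv_formula :: "bool list \<Rightarrow> bool list" where
  "Pinv_formula a = map (\<lambda>j. if j < r then a ! (piv ! j)
       else (a ! (nonpiv m piv ! (j - r)) \<noteq> odd (card {l. l < r \<and> H (nonpiv m piv ! (j - r)) l \<and> a ! (piv ! l)}))) [0..<m]"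

lemma Pinv_formula_len[simp]: "length (Pinv_formula a) = m" by (simp add: Pinv_formula_def)

lemma Pinv_formula_Pmul: "length u = m \<Longrightarrow> Pinv_formula (Pmul m r H piv u) = u"
proof (rule nth_equalityI)
  assume u: "length u = m"
  show "length (Pinv_formula (Pmul m r H piv u)) = length u" using u by simp
  fix j assume "j < length (Pinv_formula (Pmul m r H piv u))"
  hence j: "j < m" by simp
  show "Pinv_formula (Pmul m r H piv u) ! j = u ! j"
  proof (cases "j < r")
    case True thus ?thesis using j by (simp add: Pinv_formula_def Pmul_piv)
  next
    case False
    define k where "k = j - r"
    have k: "k < m - r" "j = r + k" using False j unfolding k_def by auto
    have eq: "{l. l < r \<and> H (nonpiv m piv ! k) l \<and> Pmul m r H piv u ! (piv ! l)} = {l. l < r \<and> H (nonpiv m piv ! k) l \<and> u ! l}"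
      using Pmul_piv by auto
    show ?thesis using False j k unfolding Pinv_formula_def by (simp add: Pmul_nonpiv eq) argo
  qed
qed

lemma Pmul_Pinv_formula: "length a = m \<Longrightarrow> Pmul m r H piv (Pinv_formula a) = a"
proof (rule nth_equalityI)
  assume a: "length a = m"
  show "length (Pmul m r H piv (Pinv_formula a)) = length a" using a by simp
  fix i assume "i < length (Pmul m r H piv (Pinv_formula a))"
  hence i: "i < m" by simp
  show "Pmul m r H piv (Pinv_formula a) ! i = a ! i"
    using piv_or_nonpiv[OF i]
  proof
    assume "\<exists>j<r. piv ! j = i"
    then obtain j where j: "j < r" "piv ! j = i" by blast
    have "Pmul m r H piv (Pinv_formula a) ! (piv ! j) = Pinv_formula a ! j" by (rule Pmul_piv[OF j(1)])
    also have "Pinv_formula a ! j = a ! (piv ! j)" using j(1) piv_props(4) by (simp add: Pinv_formula_def)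
    finally show ?thesis using j(2) by simp
  next
    assume "\<exists>k<m-r. nonpiv m piv ! k = i"
    then obtain k where k: "k < m - r" "nonpiv m piv ! k = i" by blast
    have eq: "{j. j < r \<and> H i j \<and> Pinv_formula a ! j} = {l. l < r \<and> H i l \<and> a ! (piv ! l)}"
    proof -
      have "\<And>j. j < r \<Longrightarrow> Pinv_formula a ! j = a ! (piv ! j)" using piv_props(4) by (simp add: Pinv_formula_def)
      thus ?thesis by blast
    qed
    have p2: "Pinv_formula a ! (r + k) = (a ! (nonpiv m piv ! k) \<noteq> odd (card {l. l < r \<and> H (nonpiv m piv ! k) l \<and> a ! (piv ! l)}))"
      using k(1) by (simp add: Pinv_formula_def)
    have "Pmul m r H piv (Pinv_formula a) ! (nonpiv m piv ! k) =
       (odd (card {j. j < r \<and> H (nonpiv m piv ! k) j \<and> Pinv_formula a ! j}) \<noteq> Pinv_formula a ! (r + k))"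
      by (rule Pmul_nonpiv[OF k(1)])
    also have "\<dots> = a ! (nonpiv m piv ! k)" unfolding p2 k(2) eq by argo
    finally show ?thesis using k(2) by simp
  qed
qed

lemma Pinv_eq: "length a = m \<Longrightarrow> Pinv m r H piv a = Pinv_formula a"
  unfolding Pinv_def
proof (rule the_equality)
  assume a: "length a = m"
  show "length (Pinv_formula a) = m \<and> Pmul m r H piv (Pinv_formula a) = a" using a Pmul_Pinv_formula by simp
  fix u assume u: "length u = m \<and> Pmul m r H piv u = a"
  hence "Pinv_formula (Pmul m r H piv u) = u" using Pinv_formula_Pmul by blast
  thus "u = Pinv_formula a" using u by simp
qed

lemma Pinv_len: "length a = m \<Longrightarrow> length (Pinv m r H piv a) = m" by (simp add: Pinv_eq)
lemma Pmul_Pinv: "length a = m \<Longrightarrow> Pmul m r H piv (Pinv m r H piv a) = a" by (simp add: Pinv_eq Pmul_Pinv_formula)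
lemma Pinv_Pmul: "length u = m \<Longrightarrow> Pinv m r H piv (Pmul m r H piv u) = u" by (simp add: Pinv_eq Pinv_formula_Pmul)
lemma Pmul_inj: "length u = m \<Longrightarrow> length u' = m \<Longrightarrow> Pmul m r H piv u = Pmul m r H piv u' \<longleftrightarrow> u = u'"
  by (metis Pinv_formula_Pmul)

lemma Pmul_bij: "bij_betw (Pmul m r H piv) (bvecs m) (bvecs m)"
proof (rule bij_betw_imageI)
  show "inj_on (Pmul m r H piv) (bvecs m)" by (rule inj_onI) (use Pmul_inj in auto)
  show "Pmul m r H piv ` bvecs m = bvecs m"
  proof
    show "Pmul m r H piv ` bvecs m \<subseteq> bvecs m" by auto
    show "bvecs m \<subseteq> Pmul m r H piv ` bvecs m"
    proof
      fix a assume "a \<in> bvecs m"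
      hence "a = Pmul m r H piv (Pinv m r H piv a)" "Pinv m r H piv a \<in> bvecs m"
        using Pmul_Pinv Pinv_len by auto
      thus "a \<in> Pmul m r H piv ` bvecs m" by blast
    qed
  qed
qed

lemma Pmul_bsign: "i < m \<Longrightarrow> bsign (Pmul m r H piv u ! i) =
   (\<Prod>j<r. bsign (H i j \<and> u ! j)) * (\<Prod>k<m-r. bsign (nonpiv m piv ! k = i \<and> u ! (r + k)))"
proof -
  assume i: "i < m"
  have "bsign (Pmul m r H piv u ! i) = (-1) ^ (card {j. j < r \<and> H i j \<and> u ! j}
     + card {k. k < m - r \<and> nonpiv m piv ! k = i \<and> u ! (r + k)})"
    unfolding Pmul_nth[OF i] by (rule bsign_odd)
  also have "\<dots> = (\<Prod>j<r. bsign (H i j \<and> u ! j)) * (\<Prod>k<m-r. bsign (nonpiv m piv ! k = i \<and> u ! (r + k)))"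
    unfolding power_add card_lt_bsign ..
  finally show ?thesis .
qed

lemma Pmul_xor: assumes u: "length u = m" "length u' = m"
  shows "Pmul m r H piv (bxor u u') = bxor (Pmul m r H piv u) (Pmul m r H piv u')"
proof (rule nth_equalityI)
  show "length (Pmul m r H piv (bxor u u')) = length (bxor (Pmul m r H piv u) (Pmul m r H piv u'))" by simp
  fix i assume "i < length (Pmul m r H piv (bxor u u'))"
  hence i: "i < m" by simp
  have "bsign (Pmul m r H piv (bxor u u') ! i) = bsign (Pmul m r H piv u ! i) * bsign (Pmul m r H piv u' ! i)"
  proof -
    have a: "(\<Prod>j<r. bsign (H i j \<and> bxor u u' ! j)) = (\<Prod>j<r. bsign (H i j \<and> u ! j)) * (\<Prod>j<r. bsign (H i j \<and> u' ! j))"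
      unfolding prod.distrib[symmetric] by (rule prod.cong) (use u r_le_m in \<open>auto simp: bsign_conj_neq[symmetric]\<close>)
    have b: "(\<Prod>k<m-r. bsign (nonpiv m piv ! k = i \<and> bxor u u' ! (r + k))) = (\<Prod>k<m-r. bsign (nonpiv m piv ! k = i \<and> u ! (r + k))) * (\<Prod>k<m-r. bsign (nonpiv m piv ! k = i \<and> u' ! (r + k)))"
      unfolding prod.distrib[symmetric] by (rule prod.cong) (use u r_le_m in \<open>auto simp: bsign_conj_neq[symmetric]\<close>)
    show ?thesis unfolding Pmul_bsign[OF i] a b by (simp add: algebra_simps)
  qed
  thus "Pmul m r H piv (bxor u u') ! i = bxor (Pmul m r H piv u) (Pmul m r H piv u') ! i"
    using i by (simp add: bsign_neq[symmetric] bsign_eq_iff)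
qed

lemma sign_bdot_Pmul: assumes l: "length \<beta> = m" "length u = m"
  shows "(-1::complex) ^ bdot m \<beta> (Pmul m r H piv u) =
    (\<Prod>j<r. if u ! j then (-1) ^ bdot m \<beta> (column m H j) else 1) * (\<Prod>k<m-r. bsign (\<beta> ! (nonpiv m piv ! k) \<and> u ! (r + k)))"
proof -
  have "(-1::complex) ^ bdot m \<beta> (Pmul m r H piv u) = (\<Prod>i<m. bsign (\<beta> ! i \<and> Pmul m r H piv u ! i))"
    by (rule sign_bdot_prod)
  also have "\<dots> = (\<Prod>i<m. (\<Prod>j<r. bsign (\<beta> ! i \<and> H i j \<and> u ! j)) * (\<Prod>k<m-r. bsign (\<beta> ! i \<and> nonpiv m piv ! k = i \<and> u ! (r + k))))"
  proof (rule prod.cong[OF refl])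
    fix i assume "i \<in> {..<m}"
    hence i: "i < m" by simp
    show "bsign (\<beta> ! i \<and> Pmul m r H piv u ! i) = (\<Prod>j<r. bsign (\<beta> ! i \<and> H i j \<and> u ! j)) * (\<Prod>k<m-r. bsign (\<beta> ! i \<and> nonpiv m piv ! k = i \<and> u ! (r + k)))"
    proof (cases "\<beta> ! i")
      case True thus ?thesis using Pmul_bsign[OF i, of u] by simp
    next
      case False thus ?thesis by simp
    qed
  qed
  also have "\<dots> = (\<Prod>i<m. \<Prod>j<r. bsign (\<beta> ! i \<and> H i j \<and> u ! j)) * (\<Prod>i<m. \<Prod>k<m-r. bsign (\<beta> ! i \<and> nonpiv m piv ! k = i \<and> u ! (r + k)))"
    by (rule prod.distrib)
  also have "(\<Prod>i<m. \<Prod>j<r. bsign (\<beta> ! i \<and> H i j \<and> u ! j)) = (\<Prod>j<r. \<Prod>i<m. bsign (\<beta> ! i \<and> H i j \<and> u ! j))"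
    by (rule prod.swap)
  also have "\<dots> = (\<Prod>j<r. if u ! j then (-1) ^ bdot m \<beta> (column m H j) else 1)"
  proof (rule prod.cong[OF refl])
    fix j
    show "(\<Prod>i<m. bsign (\<beta> ! i \<and> H i j \<and> u ! j)) = (if u ! j then (-1) ^ bdot m \<beta> (column m H j) else 1)"
      unfolding sign_bdot_prod by (cases "u ! j") (auto intro!: prod.cong)
  qed
  also have "(\<Prod>i<m. \<Prod>k<m-r. bsign (\<beta> ! i \<and> nonpiv m piv ! k = i \<and> u ! (r + k))) = (\<Prod>k<m-r. \<Prod>i<m. bsign (\<beta> ! i \<and> nonpiv m piv ! k = i \<and> u ! (r + k)))"
    by (rule prod.swap)
  also have "\<dots> = (\<Prod>k<m-r. bsign (\<beta> ! (nonpiv m piv ! k) \<and> u ! (r + k)))"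
  proof (rule prod.cong[OF refl])
    fix k assume "k \<in> {..<m-r}"
    hence k: "nonpiv m piv ! k < m" using nonpiv_lt by simp
    have "(\<Prod>i<m. bsign (\<beta> ! i \<and> nonpiv m piv ! k = i \<and> u ! (r + k))) = (\<Prod>i<m. if nonpiv m piv ! k = i then bsign (\<beta> ! (nonpiv m piv ! k) \<and> u ! (r + k)) else 1)"
      by (rule prod.cong) auto
    also have "\<dots> = bsign (\<beta> ! (nonpiv m piv ! k) \<and> u ! (r + k))" using k by (simp add: prod.delta)
    finally show "(\<Prod>i<m. bsign (\<beta> ! i \<and> nonpiv m piv ! k = i \<and> u ! (r + k))) = bsign (\<beta> ! (nonpiv m piv ! k) \<and> u ! (r + k))" .
  qed
  finally show ?thesis .
qed

text \<open>\<open>dual \<beta>\<close> is the transpose \<open>P\<^sub>I\<^sup>T \<beta>\<close>.\<close>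

definition dual :: "bool list \<Rightarrow> bool list" where
  "dual \<beta> = map (\<lambda>l. if l < r then odd (bdot m \<beta> (column m H l)) else \<beta> ! (nonpiv m piv ! (l - r))) [0..<m]"

lemma dual_len[simp]: "length (dual \<beta>) = m" by (simp add: dual_def)

lemma sign_bdot_Pmul_dual: assumes l: "length \<beta> = m" "length u = m"
  shows "(-1::complex) ^ bdot m \<beta> (Pmul m r H piv u) = (-1) ^ bdot m (dual \<beta>) u"
proof -
  have "(-1::complex) ^ bdot m (dual \<beta>) u = (\<Prod>l<r + (m - r). bsign (dual \<beta> ! l \<and> u ! l))"
    unfolding sign_bdot_prod using r_le_m by simp
  also have "\<dots> = (\<Prod>l<r. bsign (dual \<beta> ! l \<and> u ! l)) * (\<Prod>k<m-r. bsign (dual \<beta> ! (r + k) \<and> u ! (r + k)))"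
    by (rule prod_lessThan_add)
  also have "(\<Prod>l<r. bsign (dual \<beta> ! l \<and> u ! l)) = (\<Prod>j<r. if u ! j then (-1) ^ bdot m \<beta> (column m H j) else 1)"
    using r_le_m by (intro prod.cong) (auto simp: dual_def bsign_def)
  also have "(\<Prod>k<m-r. bsign (dual \<beta> ! (r + k) \<and> u ! (r + k))) = (\<Prod>k<m-r. bsign (\<beta> ! (nonpiv m piv ! k) \<and> u ! (r + k)))"
    by (intro prod.cong) (auto simp: dual_def)
  finally show ?thesis using sign_bdot_Pmul[OF l] by simp
qed

lemma dual_inj: assumes l: "length \<beta> = m" "length \<beta>' = m" and eq: "dual \<beta> = dual \<beta>'"
  shows "\<beta> = \<beta>'"
proof (rule nth_equalityI)
  show "length \<beta> = length \<beta>'" using l by simp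
  fix i assume "i < length \<beta>"
  hence i: "i < m" using l by simp
  have "(-1::complex) ^ bdot m \<beta> (evec m i) = (-1) ^ bdot m \<beta>' (evec m i)"
  proof -
    have p: "evec m i = Pmul m r H piv (Pinv m r H piv (evec m i))" using Pmul_Pinv by simp
    have "(-1::complex) ^ bdot m \<beta> (evec m i) = (-1) ^ bdot m (dual \<beta>) (Pinv m r H piv (evec m i))"
      by (subst p, rule sign_bdot_Pmul_dual[OF l(1)]) (simp add: Pinv_len)
    also have "\<dots> = (-1) ^ bdot m \<beta>' (evec m i)"
      unfolding eq by (subst p, rule sign_bdot_Pmul_dual[OF l(2), symmetric]) (simp add: Pinv_len)
    finally show ?thesis .
  qed
  thus "\<beta> ! i = \<beta>' ! i" using i by (cases "\<beta> ! i"; cases "\<beta>' ! i") (auto simp: bdot_evec)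
qed

lemma exists_sign_bdot_Pmul: assumes g: "length \<gamma> = m"
  shows "\<exists>\<beta>. length \<beta> = m \<and> (\<forall>u. length u = m \<longrightarrow> (-1::complex) ^ bdot m \<beta> (Pmul m r H piv u) = (-1) ^ bdot m \<gamma> u)"
proof -
  have inj: "inj_on dual (bvecs m)" by (rule inj_onI) (use dual_inj in auto)
  have sub: "dual ` bvecs m \<subseteq> bvecs m" by auto
  have "card (dual ` bvecs m) = card (bvecs m)" by (rule card_image[OF inj])
  hence "dual ` bvecs m = bvecs m" using card_subset_eq[OF bvecs_finite sub] by simp
  hence "\<gamma> \<in> dual ` bvecs m" using g by simp
  then obtain \<beta> where "\<beta> \<in> bvecs m" "\<gamma> = dual \<beta>" by blast
  thus ?thesis using sign_bdot_Pmul_dual by auto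
qed

lemma Pmul_evec: "j < r \<Longrightarrow> Pmul m r H piv (evec m j) = column m H j"
proof (rule nth_equalityI)
  assume j: "j < r"
  show "length (Pmul m r H piv (evec m j)) = length (column m H j)" by simp
  fix i assume "i < length (Pmul m r H piv (evec m j))"
  hence i: "i < m" by simp
  have "bsign (Pmul m r H piv (evec m j) ! i) = bsign (column m H j ! i)"
  proof -
    have a: "(\<Prod>l<r. bsign (H i l \<and> evec m j ! l)) = (\<Prod>l<r. if l = j then bsign (H i j) else 1)"
      using r_le_m by (intro prod.cong) auto
    have b: "(\<Prod>k<m-r. bsign (nonpiv m piv ! k = i \<and> evec m j ! (r + k))) = 1"
      using r_le_m j by (intro prod.neutral) auto
    show ?thesis unfolding Pmul_bsign[OF i] a b using j i by (simp add: prod.delta)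
  qed
  thus "Pmul m r H piv (evec m j) ! i = column m H j ! i" by (simp add: bsign_eq_iff)
qed

lemma Pmul_flip: assumes j: "j < r" and u: "length u = m"
  shows "Pmul m r H piv (u[j := \<not> u ! j]) = bxor (Pmul m r H piv u) (column m H j)"
proof -
  have "u[j := \<not> u ! j] = bxor u (evec m j)" using u j r_le_m
    by (auto simp: list_eq_iff_nth_eq nth_list_update)
  thus ?thesis using Pmul_xor[OF u, of "evec m j"] Pmul_evec[OF j] by simp
qed

lemma Pmul_lincomb: assumes y: "length y = r" shows "Pmul m r H piv (y @ zvec (m - r)) = lincomb m r H y"
proof (rule nth_equalityI)
  show "length (Pmul m r H piv (y @ zvec (m - r))) = length (lincomb m r H y)" by simp
  fix i assume "i < length (Pmul m r H piv (y @ zvec (m - r)))"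
  hence i: "i < m" by simp
  have a: "{j. j < r \<and> H i j \<and> (y @ zvec (m - r)) ! j} = {j. j < r \<and> H i j \<and> y ! j}"
    using y by (auto simp: nth_append)
  have b: "{k. k < m - r \<and> nonpiv m piv ! k = i \<and> (y @ zvec (m - r)) ! (r + k)} = {}"
    using y by (auto simp: nth_append)
  show "Pmul m r H piv (y @ zvec (m - r)) ! i = lincomb m r H y ! i"
    unfolding Pmul_nth[OF i] a b using i by (simp add: lincomb_def)
qed

lemma Pmul_app_xor: assumes y: "length y = r" "length y' = r" and c: "length c = m - r"
  shows "bxor (Pmul m r H piv (y @ c)) (Pmul m r H piv (y' @ zvec (m - r))) = Pmul m r H piv (bxor y y' @ c)"
proof -
  have "bxor (y @ c) (y' @ zvec (m - r)) = bxor y y' @ c"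
    using y c by (auto simp: list_eq_iff_nth_eq nth_append)
  moreover have "length (y @ c) = m" "length (y' @ zvec (m - r)) = m" using y c piv_props(4) by auto
  ultimately show ?thesis using Pmul_xor by metis
qed

end

section \<open>Binary subspace chirps are stabilizer states\<close>

locale chirp = cref_data +
  fixes S :: "nat \<Rightarrow> nat \<Rightarrow> bool" and b :: "bool list"
  assumes sym: "sym_bin r S" and bl: "length b = m"
begin

definition amp :: complex where "amp = complex_of_real (1 / sqrt (2 ^ r))"
definition w :: "bool list \<Rightarrow> complex" where "w = bssc m r H piv S b"
definition in_supp :: "bool list \<Rightarrow> bool" where "in_supp u \<longleftrightarrow> (\<forall>i\<in>{r..<m}. b ! i = u ! i)"
definition W :: "bool list \<Rightarrow> complex" where
  "W u = amp * \<i> ^ qform r S u * (-1) ^ bdot m b u * of_bool (in_supp u)"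

lemma ffun_in_supp: "ffun m b u r = of_bool (in_supp u)"
proof -
  have "ffun m b u r = (\<Prod>i\<in>{r..<m}. (of_bool (b ! i = u ! i) :: int))"
    unfolding ffun_def by (intro prod.cong refl) auto
  thus ?thesis unfolding in_supp_def by (simp add: prod_of_bool_int)
qed

lemma w_Pmul: assumes u: "length u = m" shows "w (Pmul m r H piv u) = W u"
proof -
  have lin: "(\<Sum>i<m. of_bool (b ! i) * of_bool (u ! i)) = bdot m b u"
    unfolding bdot_def by (intro sum.cong refl) simp
  have "w (Pmul m r H piv u) = amp * \<i> ^ (qform r S u + 2 * bdot m b u) * of_int (ffun m b u r)"
    unfolding w_def bssc_def Let_def Pinv_Pmul[OF u] amp_def qform_def lin[symmetric] by simp
  thus ?thesis unfolding W_def ffun_in_supp power_add minus_one_power_eq_i_power by simp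
qed

lemma w_off: "length a \<noteq> m \<Longrightarrow> w a = 0" unfolding w_def bssc_def by simp

lemma w_cvecs: "w \<in> cvecs m" unfolding cvecs_def using w_off by auto

lemma card_in_supp: "card {u \<in> bvecs m. in_supp u} = 2 ^ r"
proof -
  have "bij_betw (\<lambda>y. y @ drop r b) (bvecs r) {u \<in> bvecs m. in_supp u}"
  proof (rule bij_betw_imageI)
    show "inj_on (\<lambda>y. y @ drop r b) (bvecs r)" by (rule inj_onI) simp
    show "(\<lambda>y. y @ drop r b) ` bvecs r = {u \<in> bvecs m. in_supp u}"
    proof
      show "(\<lambda>y. y @ drop r b) ` bvecs r \<subseteq> {u \<in> bvecs m. in_supp u}"
        using bl r_le_m by (auto simp: in_supp_def nth_append)
      show "{u \<in> bvecs m. in_supp u} \<subseteq> (\<lambda>y. y @ drop r b) ` bvecs r"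
      proof
        fix u assume u: "u \<in> {u \<in> bvecs m. in_supp u}"
        have "drop r u = drop r b" using u bl r_le_m by (auto simp: in_supp_def list_eq_iff_nth_eq)
        hence "u = take r u @ drop r b" by (metis append_take_drop_id)
        moreover have "take r u \<in> bvecs r" using u r_le_m by simp
        ultimately show "u \<in> (\<lambda>y. y @ drop r b) ` bvecs r" by blast
      qed
    qed
  qed
  thus ?thesis using bij_betw_same_card bvecs_card by metis
qed

lemma cnorm2_w: "cnorm2 m w = 1"
proof -
  have "cnorm2 m w = (\<Sum>u\<in>bvecs m. (cmod (w (Pmul m r H piv u)))\<^sup>2)"
    unfolding cnorm2_def using sum.reindex_bij_betw[OF Pmul_bij, of "\<lambda>a. (cmod (w a))\<^sup>2"] by simp
  also have "\<dots> = (\<Sum>u\<in>bvecs m. (1 / 2 ^ r) * of_bool (in_supp u))"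
  proof (rule sum.cong[OF refl])
    fix u assume "u \<in> bvecs m"
    hence "w (Pmul m r H piv u) = W u" using w_Pmul by simp
    moreover have "(cmod amp)\<^sup>2 = 1 / 2 ^ r"
    proof -
      have "cmod amp = \<bar>1 / sqrt (2 ^ r)\<bar>" unfolding amp_def by (rule norm_of_real)
      thus ?thesis by (simp add: power_divide)
    qed
    ultimately show "(cmod (w (Pmul m r H piv u)))\<^sup>2 = (1 / 2 ^ r) * of_bool (in_supp u)"
      unfolding W_def by (simp add: norm_mult norm_power power_mult_distrib)
  qed
  also have "\<dots> = (1 / 2 ^ r) * (\<Sum>u\<in>bvecs m. of_bool (in_supp u))"
    by (rule sum_distrib_left[symmetric])
  also have "\<dots> = (1 / 2 ^ r) * card {u \<in> bvecs m. in_supp u}"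
    using card_filter_sum_real[OF bvecs_finite, of m in_supp] by simp
  also have "\<dots> = 1" unfolding card_in_supp by simp
  finally show ?thesis .
qed

lemma w_nonzero: "w \<noteq> (\<lambda>_. 0)"
  using cnorm2_w unfolding cnorm2_def by auto

text \<open>The stabilizers of \<open>w\<close>: for \<open>y \<in> F\<^sub>2\<^sup>r\<close> and \<open>t \<in> F\<^sub>2\<^sup>m\<^sup>-\<^sup>r\<close> the Pauli matrix with \<open>X\<close>-part
  \<open>P\<^sub>I (y, 0)\<close> whose \<open>Z\<close>-part becomes \<open>(S y, t)\<close> in the coordinates \<open>u = P\<^sub>I\<^sup>-\<^sup>1 a\<close>, with the
  phase \<open>phase_fix y t\<close> chosen so that the overall factor is \<open>1\<close>.\<close>

definition pad :: "bool list \<Rightarrow> bool list" where "pad y = y @ zvec (m - r)"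
definition gamma_vec :: "bool list \<Rightarrow> bool list \<Rightarrow> bool list" where
  "gamma_vec y t = map (\<lambda>i. if i < r then odd (\<Sum>k<r. of_bool (S i k \<and> y ! k) :: nat) else t ! (i - r)) [0..<m]"
definition b_tail :: "bool list" where "b_tail = map (\<lambda>i. r \<le> i \<and> b ! i) [0..<m]"
definition beta_vec :: "bool list \<Rightarrow> bool list \<Rightarrow> bool list" where
  "beta_vec y t = (SOME \<beta>. length \<beta> = m \<and> (\<forall>u. length u = m \<longrightarrow> (-1::complex) ^ bdot m \<beta> (Pmul m r H piv u) = (-1) ^ bdot m (gamma_vec y t) u))"
definition phase_exp :: "bool list \<Rightarrow> bool list \<Rightarrow> nat" where
  "phase_exp y t = qform r S (pad y) + 2 * bdot m (gamma_vec y t) (pad y) + 2 * bdot m (gamma_vec y t) b_tail + 2 * bdot m b (pad y)"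
definition phase_fix :: "bool list \<Rightarrow> bool list \<Rightarrow> nat" where
  "phase_fix y t = (SOME k. k < 4 \<and> (phase_exp y t + k) mod 4 = 0)"
definition chirp_stab :: "bool list \<Rightarrow> bool list \<Rightarrow> cmat" where
  "chirp_stab y t = pauli m (phase_fix y t) (Pmul m r H piv (pad y)) (beta_vec y t)"

lemma pad_len[simp]: "length y = r \<Longrightarrow> length (pad y) = m" using r_le_m by (simp add: pad_def)
lemma pad_nth_lo: "length y = r \<Longrightarrow> k < r \<Longrightarrow> pad y ! k = y ! k" by (simp add: pad_def nth_append)
lemma pad_nth_hi: "length y = r \<Longrightarrow> r \<le> k \<Longrightarrow> k < m \<Longrightarrow> pad y ! k = False" by (simp add: pad_def nth_append)
lemma gamma_vec_len[simp]: "length (gamma_vec y t) = m" by (simp add: gamma_vec_def)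
lemma b_tail_len[simp]: "length b_tail = m" by (simp add: b_tail_def)

lemma beta_vec_props: "length (beta_vec y t) = m \<and> (\<forall>u. length u = m \<longrightarrow> (-1::complex) ^ bdot m (beta_vec y t) (Pmul m r H piv u) = (-1) ^ bdot m (gamma_vec y t) u)"
  unfolding beta_vec_def by (rule someI_ex) (rule exists_sign_bdot_Pmul, simp)

lemma phase_fix_props: "phase_fix y t < 4 \<and> (phase_exp y t + phase_fix y t) mod 4 = 0"
  unfolding phase_fix_def by (rule someI_ex) (rule exists_complement_mod4)

lemma gamma_vec_split: assumes y: "length y = r" and u: "length u = m" "in_supp u"
  shows "(-1::complex) ^ bdot m (gamma_vec y t) u = (-1) ^ bform r S u (pad y) * (-1) ^ bdot m (gamma_vec y t) b_tail"
proof -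
  have mm: "m = r + (m - r)" using r_le_m by simp
  have "(-1::complex) ^ bdot m (gamma_vec y t) u = (\<Prod>i<r + (m - r). bsign (gamma_vec y t ! i \<and> u ! i))"
    unfolding sign_bdot_prod using mm by simp
  also have "\<dots> = (\<Prod>i<r. bsign (gamma_vec y t ! i \<and> u ! i)) * (\<Prod>k<m - r. bsign (gamma_vec y t ! (r + k) \<and> u ! (r + k)))"
    by (rule prod_lessThan_add)
  also have "(\<Prod>i<r. bsign (gamma_vec y t ! i \<and> u ! i)) = (-1) ^ bform r S u (pad y)"
    unfolding bform_bsign using r_le_m y by (intro prod.cong refl) (auto simp: gamma_vec_def pad_nth_lo conj_commute)
  also have "(\<Prod>k<m - r. bsign (gamma_vec y t ! (r + k) \<and> u ! (r + k))) = (\<Prod>k<m - r. bsign (gamma_vec y t ! (r + k) \<and> b_tail ! (r + k)))"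
    using u(2) unfolding in_supp_def by (intro prod.cong refl) (auto simp: b_tail_def)
  also have "\<dots> = (-1) ^ bdot m (gamma_vec y t) b_tail"
  proof -
    have "(-1::complex) ^ bdot m (gamma_vec y t) b_tail = (\<Prod>i<r + (m - r). bsign (gamma_vec y t ! i \<and> b_tail ! i))"
      unfolding sign_bdot_prod using mm by simp
    also have "\<dots> = (\<Prod>i<r. bsign (gamma_vec y t ! i \<and> b_tail ! i)) * (\<Prod>k<m - r. bsign (gamma_vec y t ! (r + k) \<and> b_tail ! (r + k)))"
      by (rule prod_lessThan_add)
    also have "(\<Prod>i<r. bsign (gamma_vec y t ! i \<and> b_tail ! i)) = 1"
      using r_le_m by (intro prod.neutral) (auto simp: b_tail_def)
    finally show ?thesis by simp
  qed
  finally show ?thesis .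
qed

lemma in_supp_xor: assumes y: "length y = r" and u: "length u = m"
  shows "in_supp (bxor u (pad y)) = in_supp u"
  unfolding in_supp_def using y u r_le_m by (auto simp: pad_nth_hi)

text \<open>Shifting by \<open>pad y\<close> inside the support changes the quadratic phase by the
  bilinear cross term, which the \<open>Z\<close>-part \<open>gamma_vec y t\<close> and the global phase undo.\<close>

lemma W_pad_shift: assumes y: "length y = r" and ul: "length u = m" and su: "in_supp u"
  defines "u' \<equiv> bxor u (pad y)"
  shows "\<i> ^ phase_fix y t * (-1) ^ bdot m (gamma_vec y t) u' * W u' = W u"
proof -
  have su': "in_supp u'" unfolding u'_def using in_supp_xor y ul su by simp
  have g1: "(-1::complex) ^ bdot m (gamma_vec y t) u' = (-1) ^ bdot m (gamma_vec y t) u * (-1) ^ bdot m (gamma_vec y t) (pad y)"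
    unfolding u'_def by (rule sign_bdot_bxor_right) (use ul y in auto)
  have g2: "(-1::complex) ^ bdot m (gamma_vec y t) u = (-1) ^ bform r S u (pad y) * (-1) ^ bdot m (gamma_vec y t) b_tail"
    by (rule gamma_vec_split[OF y ul su])
  have q: "\<i> ^ qform r S u' = \<i> ^ qform r S u * \<i> ^ qform r S (pad y) * (-1) ^ bform r S u (pad y)"
    unfolding u'_def by (rule i_power_qform_bxor[OF sym]) (use ul y r_le_m in auto)
  have d: "(-1::complex) ^ bdot m b u' = (-1) ^ bdot m b u * (-1) ^ bdot m b (pad y)"
    unfolding u'_def by (rule sign_bdot_bxor_right) (use ul y in auto)
  have k1: "\<i> ^ phase_fix y t * \<i> ^ qform r S (pad y) * (-1) ^ bdot m (gamma_vec y t) b_tail * (-1) ^ bdot m (gamma_vec y t) (pad y) * (-1) ^ bdot m b (pad y) = 1"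
  proof -
    have "\<i> ^ phase_fix y t * \<i> ^ qform r S (pad y) * (-1) ^ bdot m (gamma_vec y t) b_tail * (-1) ^ bdot m (gamma_vec y t) (pad y) * (-1) ^ bdot m b (pad y)
        = \<i> ^ (phase_exp y t + phase_fix y t)"
      unfolding phase_exp_def minus_one_power_eq_i_power power_add by (simp add: ac_simps)
    also have "\<dots> = \<i> ^ ((phase_exp y t + phase_fix y t) mod 4)" by (rule i_power_mod4)
    also have "\<dots> = 1" using phase_fix_props by simp
    finally show ?thesis .
  qed
  have bb: "(-1::complex) ^ bform r S u (pad y) * (-1) ^ bform r S u (pad y) = 1"
    by (simp add: power_add[symmetric])
  define A where "A = \<i> ^ phase_fix y t"
  define Q1 where "Q1 = \<i> ^ qform r S u"
  define Q2 where "Q2 = \<i> ^ qform r S (pad y)"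
  define Bs where "Bs = (-1::complex) ^ bform r S u (pad y)"
  define G1 where "G1 = (-1::complex) ^ bdot m (gamma_vec y t) b_tail"
  define G2 where "G2 = (-1::complex) ^ bdot m (gamma_vec y t) (pad y)"
  define D1 where "D1 = (-1::complex) ^ bdot m b u"
  define D2 where "D2 = (-1::complex) ^ bdot m b (pad y)"
  have "\<i> ^ phase_fix y t * (-1) ^ bdot m (gamma_vec y t) u' * W u' = A * (Bs * G1 * G2) * (amp * (Q1 * Q2 * Bs) * (D1 * D2))"
    unfolding W_def g1 g2 q d using su' A_def Q1_def Q2_def Bs_def G1_def G2_def D1_def D2_def by simp
  also have "\<dots> = (A * Q2 * G1 * G2 * D2) * (Bs * Bs) * (amp * Q1 * D1)" by (simp only: ac_simps)
  also have "\<dots> = amp * Q1 * D1" using k1 bb unfolding A_def Q2_def G1_def G2_def D2_def Bs_def by simp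
  also have "\<dots> = W u" unfolding W_def Q1_def D1_def using su by simp
  finally show ?thesis .
qed

lemma chirp_stab_fixes_w: assumes y: "length y = r" and v: "length v = m"
  shows "mapply m (chirp_stab y t) w v = w v"
proof -
  define u where "u = Pinv m r H piv v"
  have ul: "length u = m" and vu: "v = Pmul m r H piv u"
    unfolding u_def using Pinv_len Pmul_Pinv v by simp_all
  define u' where "u' = bxor u (pad y)"
  have u'l: "length u' = m" unfolding u'_def using ul y by simp
  have xv: "bxor v (Pmul m r H piv (pad y)) = Pmul m r H piv u'"
    unfolding vu u'_def using Pmul_xor[OF ul, of "pad y"] y by simp
  have "mapply m (chirp_stab y t) w v = \<i> ^ phase_fix y t * (-1) ^ bdot m (beta_vec y t) (Pmul m r H piv u') * w (Pmul m r H piv u')"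
    unfolding chirp_stab_def using mapply_pauli[OF v, of "Pmul m r H piv (pad y)"] xv by simp
  also have "\<dots> = \<i> ^ phase_fix y t * (-1) ^ bdot m (gamma_vec y t) u' * W u'"
    using beta_vec_props u'l w_Pmul by simp
  also have "\<dots> = W u"
  proof (cases "in_supp u")
    case False
    hence "\<not> in_supp u'" unfolding u'_def using in_supp_xor y ul by simp
    thus ?thesis using False unfolding W_def by simp
  next
    case True
    thus ?thesis using W_pad_shift[OF y ul True] unfolding u'_def by simp
  qed
  also have "\<dots> = w v" using w_Pmul ul vu by simp
  finally show ?thesis .
qed

definition Stab :: "cmat set" where "Stab = {E \<in> HW m. mapply m E w = w}"

lemma chirp_stab_in_Stab: assumes y: "length y = r" and t: "length t = m - r"
  shows "chirp_stab y t \<in> Stab"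
proof -
  have "chirp_stab y t \<in> HW m" unfolding chirp_stab_def
    by (rule pauli_in_HW) (use y phase_fix_props beta_vec_props in auto)
  moreover have "mapply m (chirp_stab y t) w = w"
  proof (rule ext)
    fix v show "mapply m (chirp_stab y t) w v = w v"
    proof (cases "length v = m")
      case True thus ?thesis using chirp_stab_fixes_w[OF y] by simp
    next
      case False thus ?thesis unfolding chirp_stab_def using mapply_pauli_outside w_off by simp
    qed
  qed
  ultimately show ?thesis unfolding Stab_def by simp
qed

lemma chirp_stab_inj: assumes y: "length y = r" "length y' = r" and t: "length t = m - r" "length t' = m - r"
  and eq: "chirp_stab y t = chirp_stab y' t'"
  shows "y = y' \<and> t = t'"
proof -
  have "\<And>u v. \<i> ^ phase_fix y t * Dmat m (Pmul m r H piv (pad y)) (beta_vec y t) u v = \<i> ^ phase_fix y' t' * Dmat m (Pmul m r H piv (pad y')) (beta_vec y' t') u v"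
    using eq unfolding chirp_stab_def pauli_def by metis
  from scaled_Dmat_eq_imp[OF _ _ _ _ _ this] have a: "Pmul m r H piv (pad y) = Pmul m r H piv (pad y')" and bb: "beta_vec y t = beta_vec y' t'"
    using y beta_vec_props by auto
  have "pad y = pad y'" using a Pmul_inj y by simp
  hence yy: "y = y'" unfolding pad_def using y by simp
  have gg: "gamma_vec y t = gamma_vec y' t'"
  proof (rule nth_equalityI)
    show "length (gamma_vec y t) = length (gamma_vec y' t')" by simp
    fix i assume "i < length (gamma_vec y t)"
    hence i: "i < m" by simp
    have "(-1::complex) ^ bdot m (gamma_vec y t) (evec m i) = (-1) ^ bdot m (beta_vec y t) (Pmul m r H piv (evec m i))"
      using beta_vec_props[of y t] by simp
    also have "\<dots> = (-1) ^ bdot m (gamma_vec y' t') (evec m i)" unfolding bb using beta_vec_props[of y' t'] by simp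
    finally have "(-1::complex) ^ bdot m (gamma_vec y t) (evec m i) = (-1) ^ bdot m (gamma_vec y' t') (evec m i)" .
    thus "gamma_vec y t ! i = gamma_vec y' t' ! i" using i
      by (cases "gamma_vec y t ! i"; cases "gamma_vec y' t' ! i") (auto simp: bdot_evec)
  qed
  have "t = t'"
  proof (rule nth_equalityI)
    show "length t = length t'" using t by simp
    fix k assume "k < length t"
    hence k: "k < m - r" using t by simp
    have "gamma_vec y t ! (r + k) = gamma_vec y' t' ! (r + k)" using gg by simp
    thus "t ! k = t' ! k" using k by (simp add: gamma_vec_def)
  qed
  thus ?thesis using yy by simp
qed

lemma card_Stab_ge: "2 ^ m \<le> card Stab"
proof -
  have fin: "finite Stab" unfolding Stab_def using HW_finite by simp
  have inj: "inj_on (\<lambda>(y, t). chirp_stab y t) (bvecs r \<times> bvecs (m - r))"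
  proof (rule inj_onI)
    fix p q assume p: "p \<in> bvecs r \<times> bvecs (m - r)" and q: "q \<in> bvecs r \<times> bvecs (m - r)"
      and e: "(\<lambda>(y, t). chirp_stab y t) p = (\<lambda>(y, t). chirp_stab y t) q"
    obtain y t where pp: "p = (y, t)" by fastforce
    obtain y' t' where qq: "q = (y', t')" by fastforce
    have "y = y' \<and> t = t'"
      by (rule chirp_stab_inj) (use p q e pp qq in simp_all)
    thus "p = q" using pp qq by simp
  qed
  have sub: "(\<lambda>(y, t). chirp_stab y t) ` (bvecs r \<times> bvecs (m - r)) \<subseteq> Stab"
    using chirp_stab_in_Stab by auto
  have "card ((\<lambda>(y, t). chirp_stab y t) ` (bvecs r \<times> bvecs (m - r))) = 2 ^ r * 2 ^ (m - r)"
    unfolding card_image[OF inj] card_cartesian_product bvecs_card ..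
  also have "\<dots> = 2 ^ m" using r_le_m by (simp add: power_add[symmetric])
  finally show ?thesis using card_mono[OF fin sub] by simp
qed

lemma bssc_stabilizer_state: "stabilizer_state m (bssc m r H piv S b)"
proof -
  have G: "stabilizer_group m Stab" unfolding Stab_def by (rule stabilizer_group_of_vector[OF w_cvecs w_nonzero])
  note P = stabilizer_group_props[OF G]
  have fixw: "\<And>E. E \<in> Stab \<Longrightarrow> mapply m E w = w" unfolding Stab_def by simp
  have n1: "cinner (bvecs m) w w = 1" using cnorm2_w cinner_cnorm2 by simp
  have "card Stab \<le> 2 ^ m" by (rule card_stabilizer_le[OF P(1,2,4,3) fixw n1])
  hence cS: "card Stab = 2 ^ m" using card_Stab_ge by simp
  have "maximal_stabilizer_group m Stab" unfolding maximal_stabilizer_group_def using G cS by simp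
  moreover have "fixed_space m Stab = {(\<lambda>a. c * w a) | c. True}"
    by (rule fixed_space_eq_span[OF G cS w_cvecs fixw cnorm2_w])
  ultimately show ?thesis unfolding stabilizer_state_def w_def[symmetric] using w_cvecs cnorm2_w by blast
qed

end

section \<open>Stabilizer states are binary subspace chirps\<close>

definition shifts :: "nat \<Rightarrow> cmat set \<Rightarrow> bool list set" where
  "shifts m S = {a. \<exists>k b. pauli m k a b \<in> S \<and> length a = m \<and> length b = m}"

lemma shifts_is_subspace: assumes G: "stabilizer_group m S" shows "is_subspace m (shifts m S)"
proof -
  have "pauli m 0 (zvec m) (zvec m) \<in> S" using G mid_eq_pauli[of m] by (simp add: stabilizer_group_def)
  hence "zvec m \<in> shifts m S" unfolding shifts_def by fastforce
  moreover have "bxor a a' \<in> shifts m S" if "a \<in> shifts m S" and "a' \<in> shifts m S" for a a'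
  proof -
    obtain k b where kb: "pauli m k a b \<in> S" "length a = m" "length b = m"
      using \<open>a \<in> shifts m S\<close> unfolding shifts_def by blast
    obtain k' b' where kb': "pauli m k' a' b' \<in> S" "length a' = m" "length b' = m"
      using \<open>a' \<in> shifts m S\<close> unfolding shifts_def by blast
    have "mmul m (pauli m k a b) (pauli m k' a' b') \<in> S" using G kb kb' by (simp add: stabilizer_group_def)
    hence "pauli m ((k + k' + 2 * bdot m b a') mod 4) (bxor a a') (bxor b b') \<in> S"
      unfolding mmul_pauli[OF kb(2,3) kb'(2,3)] .
    thus ?thesis unfolding shifts_def using kb kb' by fastforce
  qed
  ultimately show ?thesis unfolding is_subspace_def shifts_def by auto
qed

locale stabilized = cref_data +
  fixes S0 :: "cmat set" and \<psi> :: "bool list \<Rightarrow> complex" and kj :: "nat \<Rightarrow> nat"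
    and \<beta>j :: "nat \<Rightarrow> bool list" and c :: "bool list" and y0 :: "bool list"
  assumes S0: "stabilizer_group m S0"
    and fixS0: "\<And>E. E \<in> S0 \<Longrightarrow> mapply m E \<psi> = \<psi>"
    and Ej: "\<And>j. j < r \<Longrightarrow> pauli m (kj j) (column m H j) (\<beta>j j) \<in> S0 \<and> length (\<beta>j j) = m"
    and shifts_lincomb: "\<And>a. a \<in> shifts m S0 \<Longrightarrow> \<exists>y. length y = r \<and> a = lincomb m r H y"
    and cl: "length c = m - r"
    and y0: "length y0 = r" and psi_y0: "\<psi> (Pmul m r H piv (y0 @ c)) \<noteq> 0"
begin

definition coset_val :: "bool list \<Rightarrow> complex" where "coset_val y = \<psi> (Pmul m r H piv (y @ c))"
definition Amat :: "nat \<Rightarrow> nat \<Rightarrow> bool" where "Amat j l = dual (\<beta>j j) ! l"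
definition \<sigma> :: "nat \<Rightarrow> complex" where "\<sigma> j = (\<Prod>k<m - r. bsign (dual (\<beta>j j) ! (r + k) \<and> c ! k))"
definition \<mu> :: "nat \<Rightarrow> complex" where "\<mu> j = \<i> ^ kj j * \<sigma> j"

lemma sign_bdot_append: assumes y: "length y = r" and gl: "length \<gamma> = m"
  shows "(-1::complex) ^ bdot m \<gamma> (y @ c) = (\<Prod>l<r. bsign (\<gamma> ! l \<and> y ! l)) * (\<Prod>k<m - r. bsign (\<gamma> ! (r + k) \<and> c ! k))"
proof -
  have "(-1::complex) ^ bdot m \<gamma> (y @ c) = (\<Prod>i<r + (m - r). bsign (\<gamma> ! i \<and> (y @ c) ! i))"
    unfolding sign_bdot_prod using r_le_m by simp
  also have "\<dots> = (\<Prod>l<r. bsign (\<gamma> ! l \<and> (y @ c) ! l)) * (\<Prod>k<m - r. bsign (\<gamma> ! (r + k) \<and> (y @ c) ! (r + k)))"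
    by (rule prod_lessThan_add)
  also have "\<dots> = (\<Prod>l<r. bsign (\<gamma> ! l \<and> y ! l)) * (\<Prod>k<m - r. bsign (\<gamma> ! (r + k) \<and> c ! k))"
    using y by (simp add: nth_append)
  finally show ?thesis .
qed

lemma coset_val_flip: assumes j: "j < r" and y: "length y = r" and yj: "\<not> y ! j"
  shows "coset_val y = \<mu> j * (\<Prod>l<r. bsign (Amat j l \<and> y[j := True] ! l)) * coset_val (y[j := True])"
proof -
  define v where "v = Pmul m r H piv (y @ c)"
  have vl: "length v = m" unfolding v_def by simp
  have ycl: "length (y @ c) = m" using y cl r_le_m by simp
  have upd: "(y @ c)[j := \<not> (y @ c) ! j] = y[j := True] @ c" using y j yj by (simp add: list_update_append nth_append)
  have vx: "bxor v (column m H j) = Pmul m r H piv (y[j := True] @ c)"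
    unfolding v_def using Pmul_flip[OF j ycl] upd by simp
  obtain E where E: "E = pauli m (kj j) (column m H j) (\<beta>j j)" "E \<in> S0" "length (\<beta>j j) = m" using Ej[OF j] by blast
  have "coset_val y = \<psi> v" unfolding coset_val_def v_def ..
  also have "\<dots> = mapply m E \<psi> v" using fixS0[OF E(2)] by simp
  also have "\<dots> = \<i> ^ kj j * (-1) ^ bdot m (\<beta>j j) (Pmul m r H piv (y[j := True] @ c)) * \<psi> (Pmul m r H piv (y[j := True] @ c))"
    unfolding E(1) mapply_pauli[OF vl column_len] vx ..
  also have "(-1::complex) ^ bdot m (\<beta>j j) (Pmul m r H piv (y[j := True] @ c)) = (-1) ^ bdot m (dual (\<beta>j j)) (y[j := True] @ c)"
    by (rule sign_bdot_Pmul_dual) (use E(3) y cl r_le_m in auto)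
  also have "\<dots> = (\<Prod>l<r. bsign (Amat j l \<and> y[j := True] ! l)) * \<sigma> j"
    using sign_bdot_append[of "y[j := True]" "dual (\<beta>j j)"] y unfolding Amat_def \<sigma>_def by simp
  finally show ?thesis unfolding coset_val_def \<mu>_def by (simp add: ac_simps)
qed

text \<open>The symmetry of \<open>Smat\<close> comes from the commutativity of \<open>S0\<close>.\<close>

lemma Amat_sym: assumes j: "j < r" and l: "l < r" shows "Amat j l = Amat l j"
proof -
  obtain Ejj where Ejd: "Ejj = pauli m (kj j) (column m H j) (\<beta>j j)" "Ejj \<in> S0" "length (\<beta>j j) = m" using Ej[OF j] by blast
  obtain Ell where Eld: "Ell = pauli m (kj l) (column m H l) (\<beta>j l)" "Ell \<in> S0" "length (\<beta>j l) = m" using Ej[OF l] by blast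
  have "mmul m Ejj Ell = mmul m Ell Ejj" using S0 Ejd(2) Eld(2) by (simp add: stabilizer_group_def)
  hence "(\<lambda>u v. (\<i> ^ (kj j + kj l) * (-1) ^ bdot m (\<beta>j j) (column m H l)) * Dmat m (bxor (column m H j) (column m H l)) (bxor (\<beta>j j) (\<beta>j l)) u v)
       = (\<lambda>u v. (\<i> ^ (kj l + kj j) * (-1) ^ bdot m (\<beta>j l) (column m H j)) * Dmat m (bxor (column m H l) (column m H j)) (bxor (\<beta>j l) (\<beta>j j)) u v)"
    unfolding Ejd(1) Eld(1) mmul_pauli_Dmat[OF column_len Ejd(3) column_len Eld(3)] mmul_pauli_Dmat[OF column_len Eld(3) column_len Ejd(3)] .
  hence eq: "\<And>u v. (\<i> ^ (kj j + kj l) * (-1) ^ bdot m (\<beta>j j) (column m H l)) * Dmat m (bxor (column m H j) (column m H l)) (bxor (\<beta>j j) (\<beta>j l)) u v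
       = (\<i> ^ (kj j + kj l) * (-1) ^ bdot m (\<beta>j l) (column m H j)) * Dmat m (bxor (column m H j) (column m H l)) (bxor (\<beta>j j) (\<beta>j l)) u v"
    by (metis add.commute bxor_comm)
  have "\<i> ^ (kj j + kj l) * (-1::complex) ^ bdot m (\<beta>j j) (column m H l) = \<i> ^ (kj j + kj l) * (-1) ^ bdot m (\<beta>j l) (column m H j)"
    using scaled_Dmat_eq_imp[OF _ _ _ _ _ eq] Ejd(3) Eld(3) by simp
  hence "(-1::complex) ^ bdot m (\<beta>j j) (column m H l) = (-1) ^ bdot m (\<beta>j l) (column m H j)" by simp
  hence "even (bdot m (\<beta>j j) (column m H l)) = even (bdot m (\<beta>j l) (column m H j))"
    by (auto simp: minus_one_power_iff split: if_splits)
  thus ?thesis unfolding Amat_def dual_def using j l r_le_m by simp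
qed

text \<open>The element with \<open>X\<close>-part column \<open>j\<close> determines row \<open>j\<close> of \<open>Smat\<close> off the diagonal
  (via \<open>Amat\<close>) and, through its phase, both \<open>Smat j j\<close> and \<open>bvec ! j\<close>, which are the two
  binary digits of \<open>diag_exp j = Smat j j + 2 bvec\<^sub>j\<close>.\<close>

definition coset_exp :: "nat \<Rightarrow> nat" where "coset_exp j = (\<Sum>k<m - r. of_bool (dual (\<beta>j j) ! (r + k) \<and> c ! k))"
definition diag_exp :: "nat \<Rightarrow> nat" where
  "diag_exp n = (SOME q. q < 4 \<and> (kj n + 2 * coset_exp n + 2 * of_bool (Amat n n) + q) mod 4 = 0)"
definition Smat :: "nat \<Rightarrow> nat \<Rightarrow> bool" where "Smat j k = (if j = k then odd (diag_exp j) else Amat j k)"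
definition bvec :: "bool list" where "bvec = map (\<lambda>n. 2 \<le> diag_exp n) [0..<r]"
definition phase :: "bool list \<Rightarrow> complex" where "phase y = \<i> ^ qform r Smat y * (-1) ^ bdot r bvec y"

lemma bvec_len[simp]: "length bvec = r" by (simp add: bvec_def)

lemma Smat_sym: "sym_bin r Smat" unfolding sym_bin_def Smat_def using Amat_sym by auto

lemma diag_exp_props: "diag_exp n < 4 \<and> (kj n + 2 * coset_exp n + 2 * of_bool (Amat n n) + diag_exp n) mod 4 = 0"
  unfolding diag_exp_def by (rule someI_ex, rule exists_complement_mod4)

lemma sigma_coset_exp: "\<sigma> j = (-1) ^ coset_exp j"
  unfolding \<sigma>_def coset_exp_def minus_one_power_sum_of_bool bsign_def ..

lemma mu_diag_exp: "\<mu> n * bsign (Amat n n) * \<i> ^ diag_exp n = 1"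
proof -
  have "\<mu> n * bsign (Amat n n) * \<i> ^ diag_exp n = \<i> ^ (kj n + 2 * coset_exp n + 2 * of_bool (Amat n n) + diag_exp n)"
    unfolding \<mu>_def sigma_coset_exp power_add power_mult by (cases "Amat n n") (simp_all add: bsign_def)
  also have "\<dots> = \<i> ^ ((kj n + 2 * coset_exp n + 2 * of_bool (Amat n n) + diag_exp n) mod 4)" by (rule i_power_mod4)
  also have "\<dots> = 1" using diag_exp_props by simp
  finally show ?thesis .
qed

lemma mu_nz: "\<mu> n \<noteq> 0" unfolding \<mu>_def sigma_coset_exp by simp

lemma phase_flip: assumes n: "n < r" and y: "length y = r" and yn: "\<not> y ! n"
  shows "phase (y[n := True]) = phase y * \<i> ^ diag_exp n * (\<Prod>l<r. bsign (Amat n l \<and> y ! l))"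
proof -
  have yx: "y[n := True] = bxor y (evec r n)" using y n yn by (auto simp: list_eq_iff_nth_eq nth_list_update)
  have "(-1::complex) ^ bform r Smat y (evec r n) = (\<Prod>l<r. bsign (Amat n l \<and> y ! l))"
    unfolding bform_evec_sign[OF n]
  proof (rule prod.cong[OF refl])
    fix l assume "l \<in> {..<r}"
    hence "y ! l \<Longrightarrow> Smat l n = Amat n l" using yn Amat_sym[of l n] n unfolding Smat_def by auto
    thus "bsign (y ! l \<and> Smat l n) = bsign (Amat n l \<and> y ! l)" by (cases "y ! l") auto
  qed
  moreover have "\<i> ^ qform r Smat (y[n := True]) = \<i> ^ qform r Smat y * \<i> ^ qform r Smat (evec r n) * (-1) ^ bform r Smat y (evec r n)"
    unfolding yx by (rule i_power_qform_bxor[OF Smat_sym]) (use y in auto)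
  moreover have "(-1::complex) ^ bdot r bvec (y[n := True]) = (-1) ^ bdot r bvec y * (-1) ^ bdot r bvec (evec r n)"
    unfolding yx by (rule sign_bdot_bxor_right) (use y in auto)
  moreover have "(-1::complex) ^ bdot r bvec (evec r n) = bsign (2 \<le> diag_exp n)"
    using n by (simp add: bdot_evec bvec_def bsign_def)
  moreover have "\<i> ^ qform r Smat (evec r n) = \<i> ^ (of_bool (odd (diag_exp n)))"
    using n by (simp add: qform_evec Smat_def)
  ultimately have "phase (y[n := True]) = phase y * (\<i> ^ (of_bool (odd (diag_exp n))) * bsign (2 \<le> diag_exp n)) * (\<Prod>l<r. bsign (Amat n l \<and> y ! l))"
    unfolding phase_def by (simp add: ac_simps)
  thus ?thesis using i_power_bsign_split diag_exp_props by simp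
qed

lemma phase_step: assumes n: "n < r" and y: "length y = r" and yn: "\<not> y ! n"
  shows "phase y = \<mu> n * (\<Prod>l<r. bsign (Amat n l \<and> y[n := True] ! l)) * phase (y[n := True])"
proof -
  define P where "P = (\<Prod>l<r. bsign (Amat n l \<and> y ! l))"
  have "(\<Prod>l<r. bsign (Amat n l \<and> y[n := True] ! l)) = (\<Prod>l<r. bsign (Amat n l \<and> y ! l) * (if l = n then bsign (Amat n n) else 1))"
    using y yn by (intro prod.cong refl) (auto simp: nth_list_update)
  hence P': "(\<Prod>l<r. bsign (Amat n l \<and> y[n := True] ! l)) = P * bsign (Amat n n)"
    unfolding prod.distrib P_def using n by (simp add: prod.delta)
  have PP: "P * P = 1" unfolding P_def prod.distrib[symmetric] by (simp add: bsign_square)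
  have "\<mu> n * (\<Prod>l<r. bsign (Amat n l \<and> y[n := True] ! l)) * phase (y[n := True])
      = phase y * (\<mu> n * bsign (Amat n n) * \<i> ^ diag_exp n) * (P * P)"
    unfolding P' phase_flip[OF assms] P_def by (simp add: ac_simps)
  thus ?thesis unfolding mu_diag_exp PP by simp
qed

lemma phase_zvec: "phase (zvec r) = 1"
  unfolding phase_def qform_def by (simp add: bdot_def)

text \<open>On the coset \<open>P (y @ c)\<close> the state \<open>\<psi>\<close> is determined by a single value: flipping
  a coordinate of \<open>y\<close> multiplies both \<open>\<psi>\<close> and the phase by the same factor.\<close>

lemma coset_val_eq: assumes y: "length y = r" shows "coset_val y = coset_val (zvec r) * phase y"
  using y
proof (induction y rule: bool_list_flip_induct)
  case zvec thus ?case using phase_zvec by simp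
next
  case (flip y n)
  let ?K = "\<mu> n * (\<Prod>l<r. bsign (Amat n l \<and> y[n := True] ! l))"
  have "?K \<noteq> 0" using mu_nz by (simp add: bsign_def)
  moreover have "?K * coset_val (y[n := True]) = ?K * (coset_val (zvec r) * phase (y[n := True]))"
    using flip.IH coset_val_flip[OF flip.hyps] phase_step[OF flip.hyps] by simp
  ultimately show ?case by simp
qed

lemma coset_val_zvec_nonzero: "coset_val (zvec r) \<noteq> 0"
  using coset_val_eq[OF y0] psi_y0 unfolding coset_val_def by auto

lemma length_bvec_append: "length (bvec @ c) = m"
  using cl r_le_m by simp

sublocale fitted: chirp m r H piv Smat "bvec @ c"
  by unfold_locales (use Smat_sym length_bvec_append in auto)

definition in_coset :: "bool list \<Rightarrow> bool" where
  "in_coset v \<longleftrightarrow> (\<exists>y. length y = r \<and> v = Pmul m r H piv (y @ c))"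

definition coset_scale :: complex where
  "coset_scale = fitted.amp * (\<Prod>k<m - r. bsign (c ! k)) / coset_val (zvec r)"

lemma w_on_coset: assumes y: "length y = r"
  shows "fitted.w (Pmul m r H piv (y @ c)) = coset_scale * \<psi> (Pmul m r H piv (y @ c))"
proof -
  have yl: "length (y @ c) = m" using y cl r_le_m by simp
  have q: "qform r Smat (y @ c) = qform r Smat y" unfolding qform_def using y by (simp add: nth_append)
  have "(-1::complex) ^ bdot m (bvec @ c) (y @ c) = (\<Prod>i<r + (m - r). bsign ((bvec @ c) ! i \<and> (y @ c) ! i))"
    unfolding sign_bdot_prod using r_le_m by simp
  also have "\<dots> = (-1) ^ bdot r bvec y * (\<Prod>k<m - r. bsign (c ! k))"
    unfolding prod_lessThan_add sign_bdot_prod using y by (simp add: nth_append)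
  finally have d: "(-1::complex) ^ bdot m (bvec @ c) (y @ c) = (-1) ^ bdot r bvec y * (\<Prod>k<m - r. bsign (c ! k))" .
  have s: "fitted.in_supp (y @ c)" unfolding fitted.in_supp_def using y r_le_m by (auto simp: nth_append)
  have "fitted.w (Pmul m r H piv (y @ c)) = fitted.amp * (\<Prod>k<m - r. bsign (c ! k)) * phase y"
    unfolding fitted.w_Pmul[OF yl] fitted.W_def q d phase_def using s by (simp add: ac_simps)
  also have "\<dots> = coset_scale * coset_val y"
    unfolding coset_val_eq[OF y] coset_scale_def using coset_val_zvec_nonzero by simp
  finally show ?thesis unfolding coset_val_def .
qed

lemma w_off_coset: assumes v: "length v = m" and nC: "\<not> in_coset v" shows "fitted.w v = 0"
proof -
  define u where "u = Pinv m r H piv v"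
  have ul: "length u = m" and vu: "v = Pmul m r H piv u"
    unfolding u_def using Pinv_len Pmul_Pinv v by simp_all
  have "\<not> fitted.in_supp u"
  proof
    assume su: "fitted.in_supp u"
    have "drop r u = c"
    proof (rule nth_equalityI)
      show "length (drop r u) = length c" using ul cl by simp
      fix k assume "k < length (drop r u)"
      hence "r + k < m" using ul by simp
      hence "(bvec @ c) ! (r + k) = u ! (r + k)" using su unfolding fitted.in_supp_def by simp
      thus "drop r u ! k = c ! k" using ul r_le_m by (simp add: nth_append)
    qed
    hence "u = take r u @ c" by (metis append_take_drop_id)
    hence "in_coset v" unfolding in_coset_def using vu ul r_le_m by (intro exI[of _ "take r u"]) auto
    thus False using nC by simp
  qed
  thus ?thesis using fitted.w_Pmul[OF ul] vu unfolding fitted.W_def by simp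
qed

lemma w_eq_masked_psi: assumes v: "length v = m"
  shows "fitted.w v = (if in_coset v then coset_scale * \<psi> v else 0)"
proof (cases "in_coset v")
  case True
  then obtain y where "length y = r" "v = Pmul m r H piv (y @ c)" unfolding in_coset_def by blast
  thus ?thesis using w_on_coset True by simp
next
  case False thus ?thesis using w_off_coset[OF v] by simp
qed

lemma in_coset_bxor_shift: assumes a: "a \<in> shifts m S0" and v: "length v = m"
  shows "in_coset (bxor v a) \<longleftrightarrow> in_coset v"
proof -
  obtain ya where ya: "length ya = r" "a = Pmul m r H piv (ya @ zvec (m - r))"
    using shifts_lincomb[OF a] Pmul_lincomb by metis
  have al: "length a = m" using a unfolding shifts_def by blast
  have "in_coset (bxor v' a)" if v': "in_coset v'" for v'
  proof -
    obtain y where "length y = r" "v' = Pmul m r H piv (y @ c)" using v' unfolding in_coset_def by blast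
    thus ?thesis unfolding in_coset_def using ya Pmul_app_xor[OF _ ya(1) cl] by (intro exI[of _ "bxor y ya"]) simp
  qed
  moreover have "bxor (bxor v a) a = v" using v al by (simp add: bxor_cancel)
  ultimately show ?thesis by metis
qed

text \<open>The chirp is a multiple of \<open>\<psi>\<close> restricted to the coset, and the shifts of \<open>S0\<close> preserve the coset.\<close>

lemma w_fixed: assumes E: "E \<in> S0" shows "mapply m E fitted.w = fitted.w"
proof
  fix v
  obtain k a b where Ed: "E = pauli m k a b" "length a = m" "length b = m"
    using E S0 HW_eq_pauli stabilizer_group_props(2) by blast
  have a: "a \<in> shifts m S0" unfolding shifts_def using E Ed by blast
  show "mapply m E fitted.w v = fitted.w v"
  proof (cases "length v = m")
    case False thus ?thesis unfolding Ed(1) using mapply_pauli_outside fitted.w_off by simp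
  next
    case True
    have "\<psi> v = \<i> ^ k * (-1) ^ bdot m b (bxor v a) * \<psi> (bxor v a)"
      using fixS0[OF E] mapply_pauli[OF True Ed(2), of k b \<psi>] Ed(1) by simp
    moreover have "fitted.w (bxor v a) = (if in_coset v then coset_scale * \<psi> (bxor v a) else 0)"
      using w_eq_masked_psi[of "bxor v a"] in_coset_bxor_shift[OF a True] True Ed(2) by simp
    ultimately show ?thesis
      unfolding Ed(1) mapply_pauli[OF True Ed(2)] using w_eq_masked_psi[OF True] by simp
  qed
qed

end

lemma fixed_vector_of_stabilizer_state:
  assumes fs: "fixed_space m S = {(\<lambda>a. c * \<psi> a) | c. True}" and n1: "cnorm2 m \<psi> = 1"
    and w: "w \<in> cvecs m" "\<And>E. E \<in> S \<Longrightarrow> mapply m E w = w" and nw: "cnorm2 m w = 1"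
  shows "\<exists>c. cmod c = 1 \<and> \<psi> = (\<lambda>a. c * w a)"
proof -
  have "w \<in> fixed_space m S" unfolding fixed_space_def using w by simp
  then obtain c where c: "w = (\<lambda>a. c * \<psi> a)" unfolding fs by blast
  have "(cmod c)\<^sup>2 = 1" using nw n1 c unfolding cnorm2_def
    by (simp add: norm_mult power_mult_distrib sum_distrib_left[symmetric])
  hence cm: "cmod c = 1" using norm_ge_zero[of c] by (auto simp: power2_eq_1_iff)
  hence "\<psi> = (\<lambda>a. (1 / c) * w a)" using c by (auto intro!: ext)
  moreover have "cmod (1 / c) = 1" using cm by (simp add: norm_divide)
  ultimately show ?thesis by blast
qed

lemma bssc_is_stabilizer_state: assumes c: "is_cref m r H piv" and s: "sym_bin r S" and b: "b \<in> bvecs m"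
  shows "stabilizer_state m (bssc m r H piv S b)"
proof -
  interpret chirp m r H piv S b by unfold_locales (use c s b in auto)
  show ?thesis by (rule bssc_stabilizer_state)
qed

lemma stabilizer_state_is_scaled_bssc: assumes st: "stabilizer_state m \<psi>"
  shows "\<exists>r H piv S b c. r \<le> m \<and> is_cref m r H piv \<and> sym_bin r S \<and> b \<in> bvecs m \<and>
               cmod c = 1 \<and> \<psi> = (\<lambda>a. c * bssc m r H piv S b a)"
proof -
  obtain S0 where G: "stabilizer_group m S0" and psic: "\<psi> \<in> cvecs m" and n1: "cnorm2 m \<psi> = 1"
    and fs: "fixed_space m S0 = {(\<lambda>a. c * \<psi> a) | c. True}"
    using st unfolding stabilizer_state_def maximal_stabilizer_group_def by blast
  have "\<psi> \<in> fixed_space m S0" unfolding fs by (rule CollectI, rule exI[of _ 1]) simp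
  hence fixS0: "\<And>E. E \<in> S0 \<Longrightarrow> mapply m E \<psi> = \<psi>" unfolding fixed_space_def by blast
  obtain r H piv where cref: "is_cref m r H piv" and cols: "\<forall>j<r. column m H j \<in> shifts m S0"
    and rep: "\<forall>a\<in>shifts m S0. \<exists>y. length y = r \<and> a = lincomb m r H y"
    using subspace_echelon_basis[OF shifts_is_subspace[OF G]] unfolding echelon_basis_def by blast
  interpret cref_data m r H piv by unfold_locales (rule cref)
  have "\<forall>j. \<exists>p. j < r \<longrightarrow> pauli m (fst p) (column m H j) (snd p) \<in> S0 \<and> length (snd p) = m"
    using cols unfolding shifts_def by fastforce
  then obtain f where f: "\<And>j. j < r \<Longrightarrow> pauli m (fst (f j)) (column m H j) (snd (f j)) \<in> S0 \<and> length (snd (f j)) = m"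
    by (metis choice)
  obtain u0 where u0: "\<psi> u0 \<noteq> 0" using n1 unfolding cnorm2_def by fastforce
  define p where "p = Pinv m r H piv u0"
  have "length u0 = m" using u0 psic unfolding cvecs_def by auto
  hence p: "length p = m" "Pmul m r H piv (take r p @ drop r p) = u0"
    unfolding p_def using Pmul_Pinv Pinv_len by simp_all
  interpret stabilized m r H piv S0 \<psi> "\<lambda>j. fst (f j)" "\<lambda>j. snd (f j)" "drop r p" "take r p"
    by unfold_locales (use G fixS0 f rep u0 p r_le_m in simp_all)
  obtain c where "cmod c = 1" "\<psi> = (\<lambda>a. c * fitted.w a)"
    using fixed_vector_of_stabilizer_state[OF fs n1 fitted.w_cvecs w_fixed fitted.cnorm2_w] by blast
  moreover have "bvec @ drop r p \<in> bvecs m" using length_bvec_append by simp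
  ultimately show ?thesis using r_le_m cref Smat_sym unfolding fitted.w_def by blast
qed

theorem corollary2:
  fixes m :: nat
  assumes "m \<ge> 1"
  shows "(\<forall>r H piv S b. r \<le> m \<and> is_cref m r H piv \<and> sym_bin r S \<and> b \<in> bvecs m \<longrightarrow>
            stabilizer_state m (bssc m r H piv S b))
       \<and> (\<forall>\<psi>. stabilizer_state m \<psi> \<longrightarrow>
            (\<exists>r H piv S b c. r \<le> m \<and> is_cref m r H piv \<and> sym_bin r S \<and> b \<in> bvecs m \<and>
               cmod c = 1 \<and> \<psi> = (\<lambda>a. c * bssc m r H piv S b a)))"
  using bssc_is_stabilizer_state stabilizer_state_is_scaled_bssc by blast

end
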